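(* Let $\epsilon\in(0,2)$ and let $\mathcal{L}^2=L^2(-\pi,\pi)$. Define the following operators in $\mathcal{L}^2$: (i) $L$: $(Ly)(x)=\epsilon\,(\sin(x)\,y'(x))'+y'(x)$, with domain $\mathfrak{D}(L)$ consisting of all absolutely continuous $2\pi$-periodic functions $y$ (i.e. $y(-\pi)=y(\pi)$) for which $\sin(x)y'(x)$ is locally absolutely continuous, so that the expression $(Ly)(x)$ is defined, and $(Ly)(x)\in\mathcal{L}^2$; (ii) $S$: $(Sy)(x)=y'(x)$, with domain consisting of all absolutely continuous $y$ on $[-\pi,\pi]$ with $y'\in\mathcal{L}^2$ and $y(-\pi)=y(\pi)$; (iii) $M$: $(My)(x)=\epsilon\,(\sin(x)\,y(x))'+y(x)$, with domain consisting of all $y\in\mathcal{L}^2$ for which $\sin(x)y(x)$ is absolutely continuous and $(My)(x)\in\mathcal{L}^2$. Then $L=MS$, where $MS$ is the operator product with domain $\{y\in\mathfrak{D}(S): Sy\in\mathfrak{D}(M)\}$; in particular $\mathfrak{D}(L)=\mathfrak{D}(MS)$.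
   Context: All functions are complex-valued on $(-\pi,\pi)$; $\mathcal{L}^2$ is the standard Lebesgue space on $(-\pi,\pi)$. Equality of unbounded operators means equality of domains and of actions. *)

theory Defs
  imports "HOL-Analysis.Analysis"
begin

definition Om :: "real measure" where
  "Om = lebesgue_on {-pi<..<pi}"

definition sq_int :: "(real \<Rightarrow> complex) \<Rightarrow> bool" where
  "sq_int y \<longleftrightarrow> y \<in> borel_measurable Om \<and> integrable Om (\<lambda>x. (norm (y x))^2)"

definition abs_cont_on :: "real \<Rightarrow> real \<Rightarrow> (real \<Rightarrow> complex) \<Rightarrow> bool" where
  "abs_cont_on a b f \<longleftrightarrow>
     (\<forall>e>0. \<exists>d>0. \<forall>(n::nat) (u::nat \<Rightarrow> real) (v::nat \<Rightarrow> real).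
        (\<forall>k<n. a \<le> u k \<and> u k \<le> v k \<and> v k \<le> b) \<longrightarrow>
        (\<forall>i<n. \<forall>j<n. i \<noteq> j \<longrightarrow> v i \<le> u j \<or> v j \<le> u i) \<longrightarrow>
        (\<Sum>k<n. v k - u k) < d \<longrightarrow>
        (\<Sum>k<n. norm (f (v k) - f (u k))) < e)"

definition loc_abs_cont :: "(real \<Rightarrow> complex) \<Rightarrow> bool" where
  "loc_abs_cont f \<longleftrightarrow> (\<forall>a b. -pi < a \<longrightarrow> b < pi \<longrightarrow> abs_cont_on a b f)"

text \<open>Graphs of the operators, on representatives; y and f are L2 representatives and
  all conditions are invariant under a.e. modification of y and f.
  graph_X y f means: (the class of) y lies in the domain of X and X y = f in L2.\<close>

definition graph_L :: "real \<Rightarrow> (real \<Rightarrow> complex) \<Rightarrow> (real \<Rightarrow> complex) \<Rightarrow> bool" where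
  "graph_L \<epsilon> y f \<longleftrightarrow> sq_int y \<and> sq_int f \<and>
     (\<exists>y0 g p q.
        (AE x in Om. y x = y0 x) \<and> abs_cont_on (-pi) pi y0 \<and> y0 (-pi) = y0 pi \<and>
        (AE x in Om. (y0 has_vector_derivative g x) (at x)) \<and>
        loc_abs_cont p \<and> (AE x in Om. p x = complex_of_real (sin x) * g x) \<and>
        (AE x in Om. (p has_vector_derivative q x) (at x)) \<and>
        (AE x in Om. f x = complex_of_real \<epsilon> * q x + g x))"

definition graph_S :: "(real \<Rightarrow> complex) \<Rightarrow> (real \<Rightarrow> complex) \<Rightarrow> bool" where
  "graph_S y f \<longleftrightarrow> sq_int y \<and> sq_int f \<and>
     (\<exists>y0. (AE x in Om. y x = y0 x) \<and> abs_cont_on (-pi) pi y0 \<and> y0 (-pi) = y0 pi \<and>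
        (AE x in Om. (y0 has_vector_derivative f x) (at x)))"

definition graph_M :: "real \<Rightarrow> (real \<Rightarrow> complex) \<Rightarrow> (real \<Rightarrow> complex) \<Rightarrow> bool" where
  "graph_M \<epsilon> y f \<longleftrightarrow> sq_int y \<and> sq_int f \<and>
     (\<exists>p q. abs_cont_on (-pi) pi p \<and> (AE x in Om. p x = complex_of_real (sin x) * y x) \<and>
        (AE x in Om. (p has_vector_derivative q x) (at x)) \<and>
        (AE x in Om. f x = complex_of_real \<epsilon> * q x + y x))"

definition graph_MS :: "real \<Rightarrow> (real \<Rightarrow> complex) \<Rightarrow> (real \<Rightarrow> complex) \<Rightarrow> bool" where
  "graph_MS \<epsilon> y f \<longleftrightarrow> (\<exists>z. graph_S y z \<and> graph_M \<epsilon> z f)"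

end

theory Submission
  imports Defs
begin

text \<open>Only \<open>\<D>(L) \<subseteq> \<D>(MS)\<close> needs work. For \<open>y \<in> \<D>(L)\<close> put \<open>g = y'\<close>, \<open>p = sin * g\<close>, so that
  \<open>L y = \<epsilon> p' + g\<close>. Since \<open>p' = (L y - g) / \<epsilon>\<close> almost everywhere, \<open>p\<close> extends to an absolutely
  continuous function on \<open>[-pi, pi]\<close>; the real point is \<open>g \<in> L\<^sup>2\<close>.

  On \<open>(0, pi)\<close>, differentiating the energy \<open>|p|\<^sup>2 / sin\<close> and using \<open>\<epsilon> < 2\<close> gives
  \<open>\<integral>\<^sub>a\<^sup>b |g|\<^sup>2 \<le> C (\<parallel>L y\<parallel>\<^sup>2 + |p a|\<^sup>2 / sin a)\<close>, the boundary term at \<open>b\<close> having a favourable sign.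
  The term at \<open>a\<close> stays bounded as \<open>a \<rightarrow> 0\<close> because \<open>|p x| = O(\<surd>x)\<close>: with the integrating factor
  \<open>w = tan (t/2) powr (1/\<epsilon>)\<close> one has \<open>(w p)' = w L y / \<epsilon>\<close>, and a larger \<open>|p x|\<close> would force
  \<open>Re (c * g t) \<ge> const / t\<close> on \<open>(0, x)\<close>, contradicting the boundedness of \<open>y = \<integral> g\<close>.
  The interval \<open>(-pi, 0)\<close> is reduced to \<open>(0, pi)\<close> by reflection.\<close>

hide_const (open) Polynomial.content

section \<open>Absolute continuity\<close>

lemma abs_cont_onE:
  assumes "abs_cont_on a b F" "e > 0"
  obtains d where "d > 0" "\<And>(n::nat) u v. \<forall>k<n. a \<le> u k \<and> u k \<le> v k \<and> v k \<le> b \<Longrightarrow>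
      \<forall>i<n. \<forall>j<n. i \<noteq> j \<longrightarrow> v i \<le> u j \<or> v j \<le> u i \<Longrightarrow>
      (\<Sum>k<n. v k - u k) < d \<Longrightarrow> (\<Sum>k<n. norm (F (v k) - F (u k))) < e"
  using assms unfolding abs_cont_on_def by blast

lemma abs_cont_onI:
  assumes "\<And>e. e > 0 \<Longrightarrow> \<exists>d>0. \<forall>(n::nat) u v. (\<forall>k<n. a \<le> u k \<and> u k \<le> v k \<and> v k \<le> b) \<longrightarrow>
      (\<forall>i<n. \<forall>j<n. i \<noteq> j \<longrightarrow> v i \<le> u j \<or> v j \<le> u i) \<longrightarrow>
      (\<Sum>k<n. v k - u k) < d \<longrightarrow> (\<Sum>k<n. norm (F (v k) - F (u k))) < e"
  shows "abs_cont_on a b F"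
  using assms unfolding abs_cont_on_def by blast

lemma abs_cont_on_indexedE:
  assumes "abs_cont_on a b F" "e > 0"
  obtains d where "d > 0" "\<And>I u v. finite I \<Longrightarrow> \<forall>i\<in>I. a \<le> u i \<and> u i \<le> v i \<and> v i \<le> b \<Longrightarrow>
      \<forall>i\<in>I. \<forall>j\<in>I. i \<noteq> j \<longrightarrow> v i \<le> u j \<or> v j \<le> u i \<Longrightarrow>
      (\<Sum>i\<in>I. v i - u i) < d \<Longrightarrow> (\<Sum>i\<in>I. norm (F (v i) - F (u i))) < e"
proof -
  obtain d where d: "d > 0" and D: "\<And>(n::nat) u v. \<forall>k<n. a \<le> u k \<and> u k \<le> v k \<and> v k \<le> b \<Longrightarrow>
      \<forall>i<n. \<forall>j<n. i \<noteq> j \<longrightarrow> v i \<le> u j \<or> v j \<le> u i \<Longrightarrow>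
      (\<Sum>k<n. v k - u k) < d \<Longrightarrow> (\<Sum>k<n. norm (F (v k) - F (u k))) < e"
    using abs_cont_onE[OF assms] by blast
  show ?thesis
  proof (rule that[OF d])
    fix I and u v :: "_ \<Rightarrow> real"
    assume I: "finite I" and r: "\<forall>i\<in>I. a \<le> u i \<and> u i \<le> v i \<and> v i \<le> b"
      and no: "\<forall>i\<in>I. \<forall>j\<in>I. i \<noteq> j \<longrightarrow> v i \<le> u j \<or> v j \<le> u i"
      and s: "(\<Sum>i\<in>I. v i - u i) < d"
    obtain h where h: "bij_betw h {..<card I} I"
      using ex_bij_betw_nat_finite[OF I] by (auto simp: lessThan_atLeast0)
    have hI: "h k \<in> I" if "k < card I" for k using h that by (auto simp: bij_betw_def)
    have hinj: "h i \<noteq> h j" if "i < card I" "j < card I" "i \<noteq> j" for i j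
      using h that by (auto simp: bij_betw_def inj_on_def)
    have "(\<Sum>k<card I. norm (F (v (h k)) - F (u (h k)))) < e"
    proof (rule D)
      show "\<forall>k<card I. a \<le> u (h k) \<and> u (h k) \<le> v (h k) \<and> v (h k) \<le> b" using hI r by blast
      show "\<forall>i<card I. \<forall>j<card I. i \<noteq> j \<longrightarrow> v (h i) \<le> u (h j) \<or> v (h j) \<le> u (h i)"
        using hI hinj no by blast
      show "(\<Sum>k<card I. v (h k) - u (h k)) < d"
        using sum.reindex_bij_betw[OF h, of "\<lambda>i. v i - u i"] s by simp
    qed
    then show "(\<Sum>i\<in>I. norm (F (v i) - F (u i))) < e"
      using sum.reindex_bij_betw[OF h, of "\<lambda>i. norm (F (v i) - F (u i))"] by simp
  qed
qed

lemma abs_cont_on_dominated: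
  assumes F: "abs_cont_on a b F" and G: "abs_cont_on a b G" and c: "c1 \<ge> 0" "c2 \<ge> 0"
    and H: "\<And>u v. a \<le> u \<Longrightarrow> u \<le> v \<Longrightarrow> v \<le> b \<Longrightarrow>
      norm (H v - H u) \<le> c1 * norm (F v - F u) + c2 * norm (G v - G u)"
  shows "abs_cont_on a b H"
proof (rule abs_cont_onI)
  fix e :: real assume e: "e > 0"
  define e' where "e' = e / (c1 + c2 + 1)"
  have e': "e' > 0" using e c by (simp add: e'_def)
  obtain d1 where d1: "d1 > 0" and D1: "\<And>(n::nat) u v. \<forall>k<n. a \<le> u k \<and> u k \<le> v k \<and> v k \<le> b \<Longrightarrow>
      \<forall>i<n. \<forall>j<n. i \<noteq> j \<longrightarrow> v i \<le> u j \<or> v j \<le> u i \<Longrightarrow>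
      (\<Sum>k<n. v k - u k) < d1 \<Longrightarrow> (\<Sum>k<n. norm (F (v k) - F (u k))) < e'"
    using abs_cont_onE[OF F e'] by blast
  obtain d2 where d2: "d2 > 0" and D2: "\<And>(n::nat) u v. \<forall>k<n. a \<le> u k \<and> u k \<le> v k \<and> v k \<le> b \<Longrightarrow>
      \<forall>i<n. \<forall>j<n. i \<noteq> j \<longrightarrow> v i \<le> u j \<or> v j \<le> u i \<Longrightarrow>
      (\<Sum>k<n. v k - u k) < d2 \<Longrightarrow> (\<Sum>k<n. norm (G (v k) - G (u k))) < e'"
    using abs_cont_onE[OF G e'] by blast
  show "\<exists>d>0. \<forall>(n::nat) u v. (\<forall>k<n. a \<le> u k \<and> u k \<le> v k \<and> v k \<le> b) \<longrightarrow>
      (\<forall>i<n. \<forall>j<n. i \<noteq> j \<longrightarrow> v i \<le> u j \<or> v j \<le> u i) \<longrightarrow>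
      (\<Sum>k<n. v k - u k) < d \<longrightarrow> (\<Sum>k<n. norm (H (v k) - H (u k))) < e"
  proof (intro exI[of _ "min d1 d2"] conjI allI impI)
    fix n :: nat and u v :: "nat \<Rightarrow> real"
    assume r: "\<forall>k<n. a \<le> u k \<and> u k \<le> v k \<and> v k \<le> b"
      and no: "\<forall>i<n. \<forall>j<n. i \<noteq> j \<longrightarrow> v i \<le> u j \<or> v j \<le> u i"
      and s: "(\<Sum>k<n. v k - u k) < min d1 d2"
    have "(\<Sum>k<n. norm (H (v k) - H (u k)))
        \<le> (\<Sum>k<n. c1 * norm (F (v k) - F (u k)) + c2 * norm (G (v k) - G (u k)))"
      by (rule sum_mono) (use r H in auto)
    also have "\<dots> = c1 * (\<Sum>k<n. norm (F (v k) - F (u k))) + c2 * (\<Sum>k<n. norm (G (v k) - G (u k)))"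
      by (simp add: sum.distrib sum_distrib_left)
    also have "\<dots> \<le> c1 * e' + c2 * e'"
      using D1[OF r no] D2[OF r no] s c by (intro add_mono mult_left_mono) auto
    also have "\<dots> < (c1 + c2 + 1) * e'" using e' by (simp add: algebra_simps)
    also have "\<dots> = e" using c unfolding e'_def by simp
    finally show "(\<Sum>k<n. norm (H (v k) - H (u k))) < e" .
  qed (use d1 d2 in auto)
qed

lemma abs_cont_on_of_real_id: "abs_cont_on a b (\<lambda>x. complex_of_real x)"
proof (rule abs_cont_onI)
  fix e :: real assume e: "e > 0"
  show "\<exists>d>0. \<forall>(n::nat) u v. (\<forall>k<n. a \<le> u k \<and> u k \<le> v k \<and> v k \<le> b) \<longrightarrow>
      (\<forall>i<n. \<forall>j<n. i \<noteq> j \<longrightarrow> v i \<le> u j \<or> v j \<le> u i) \<longrightarrow>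
      (\<Sum>k<n. v k - u k) < d \<longrightarrow> (\<Sum>k<n. norm (complex_of_real (v k) - complex_of_real (u k))) < e"
  proof (intro exI[of _ e] conjI allI impI)
    fix n :: nat and u v :: "nat \<Rightarrow> real"
    assume r: "\<forall>k<n. a \<le> u k \<and> u k \<le> v k \<and> v k \<le> b" and s: "(\<Sum>k<n. v k - u k) < e"
    have "(\<Sum>k<n. norm (complex_of_real (v k) - complex_of_real (u k))) = (\<Sum>k<n. v k - u k)"
      by (rule sum.cong) (use r in \<open>auto simp flip: of_real_diff\<close>)
    then show "(\<Sum>k<n. norm (complex_of_real (v k) - complex_of_real (u k))) < e" using s by simp
  qed (use e in auto)
qed

lemma abs_cont_on_lipschitz:
  assumes "L \<ge> 0" "\<And>u v. a \<le> u \<Longrightarrow> u \<le> v \<Longrightarrow> v \<le> b \<Longrightarrow> norm (H v - H u) \<le> L * (v - u)"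
  shows "abs_cont_on a b H"
proof (rule abs_cont_on_dominated[OF abs_cont_on_of_real_id abs_cont_on_of_real_id assms(1) order_refl])
  fix u v :: real assume "a \<le> u" "u \<le> v" "v \<le> b"
  then show "norm (H v - H u) \<le> L * norm (complex_of_real v - complex_of_real u)
      + 0 * norm (complex_of_real v - complex_of_real u)"
    using assms(2)[of u v] by (simp flip: of_real_diff)
qed

lemma abs_cont_on_const: "abs_cont_on a b (\<lambda>x. c)"
  by (rule abs_cont_on_lipschitz[of 0]) auto

lemma abs_cont_on_add:
  assumes "abs_cont_on a b F" "abs_cont_on a b G"
  shows "abs_cont_on a b (\<lambda>x. F x + G x)"
proof (rule abs_cont_on_dominated[OF assms, of 1 1])
  fix u v :: real
  have "F v + G v - (F u + G u) = (F v - F u) + (G v - G u)" by simp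
  then show "norm (F v + G v - (F u + G u)) \<le> 1 * norm (F v - F u) + 1 * norm (G v - G u)"
    by (metis mult_1 norm_triangle_ineq)
qed auto

lemma abs_cont_on_cmult:
  assumes "abs_cont_on a b F"
  shows "abs_cont_on a b (\<lambda>x. c * F x)"
  by (rule abs_cont_on_dominated[OF assms assms, of "norm c" 0])
     (auto simp: norm_mult simp flip: right_diff_distrib)

lemma abs_cont_on_diff:
  assumes "abs_cont_on a b F" "abs_cont_on a b G"
  shows "abs_cont_on a b (\<lambda>x. F x - G x)"
  using abs_cont_on_add[OF assms(1) abs_cont_on_cmult[OF assms(2), of "-1"]] by simp

lemma abs_cont_on_cnj:
  assumes "abs_cont_on a b F"
  shows "abs_cont_on a b (\<lambda>x. cnj (F x))"
  by (rule abs_cont_on_dominated[OF assms assms, of 1 0]) (auto simp flip: complex_cnj_diff)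

lemma abs_cont_on_subinterval:
  assumes "abs_cont_on a b F" "a \<le> a'" "b' \<le> b"
  shows "abs_cont_on a' b' F"
proof (rule abs_cont_onI)
  fix e :: real assume "e > 0"
  then obtain d where "d > 0" and D: "\<And>(n::nat) u v. \<forall>k<n. a \<le> u k \<and> u k \<le> v k \<and> v k \<le> b \<Longrightarrow>
      \<forall>i<n. \<forall>j<n. i \<noteq> j \<longrightarrow> v i \<le> u j \<or> v j \<le> u i \<Longrightarrow>
      (\<Sum>k<n. v k - u k) < d \<Longrightarrow> (\<Sum>k<n. norm (F (v k) - F (u k))) < e"
    using abs_cont_onE[OF assms(1)] by blast
  show "\<exists>d>0. \<forall>(n::nat) u v. (\<forall>k<n. a' \<le> u k \<and> u k \<le> v k \<and> v k \<le> b') \<longrightarrow>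
      (\<forall>i<n. \<forall>j<n. i \<noteq> j \<longrightarrow> v i \<le> u j \<or> v j \<le> u i) \<longrightarrow>
      (\<Sum>k<n. v k - u k) < d \<longrightarrow> (\<Sum>k<n. norm (F (v k) - F (u k))) < e"
  proof (intro exI[of _ d] conjI allI impI)
    fix n :: nat and u v :: "nat \<Rightarrow> real"
    assume "\<forall>k<n. a' \<le> u k \<and> u k \<le> v k \<and> v k \<le> b'"
    then have "\<forall>k<n. a \<le> u k \<and> u k \<le> v k \<and> v k \<le> b" using assms(2,3) by force
    then show "\<forall>i<n. \<forall>j<n. i \<noteq> j \<longrightarrow> v i \<le> u j \<or> v j \<le> u i \<Longrightarrow>
      (\<Sum>k<n. v k - u k) < d \<Longrightarrow> (\<Sum>k<n. norm (F (v k) - F (u k))) < e"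
      by (rule D)
  qed (use \<open>d > 0\<close> in auto)
qed

lemma abs_cont_on_reflect:
  assumes "abs_cont_on a b F"
  shows "abs_cont_on (-b) (-a) (\<lambda>x. F (- x))"
proof (rule abs_cont_onI)
  fix e :: real assume "e > 0"
  then obtain d where "d > 0" and D: "\<And>(n::nat) u v. \<forall>k<n. a \<le> u k \<and> u k \<le> v k \<and> v k \<le> b \<Longrightarrow>
      \<forall>i<n. \<forall>j<n. i \<noteq> j \<longrightarrow> v i \<le> u j \<or> v j \<le> u i \<Longrightarrow>
      (\<Sum>k<n. v k - u k) < d \<Longrightarrow> (\<Sum>k<n. norm (F (v k) - F (u k))) < e"
    using abs_cont_onE[OF assms] by blast
  show "\<exists>d>0. \<forall>(n::nat) u v. (\<forall>k<n. - b \<le> u k \<and> u k \<le> v k \<and> v k \<le> - a) \<longrightarrow>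
      (\<forall>i<n. \<forall>j<n. i \<noteq> j \<longrightarrow> v i \<le> u j \<or> v j \<le> u i) \<longrightarrow>
      (\<Sum>k<n. v k - u k) < d \<longrightarrow> (\<Sum>k<n. norm (F (- v k) - F (- u k))) < e"
  proof (intro exI[of _ d] conjI allI impI)
    fix n :: nat and u v :: "nat \<Rightarrow> real"
    assume r: "\<forall>k<n. - b \<le> u k \<and> u k \<le> v k \<and> v k \<le> - a"
      and no: "\<forall>i<n. \<forall>j<n. i \<noteq> j \<longrightarrow> v i \<le> u j \<or> v j \<le> u i"
      and s: "(\<Sum>k<n. v k - u k) < d"
    have "\<forall>k<n. a \<le> - v k \<and> - v k \<le> - u k \<and> - u k \<le> b" using r by force
    moreover have "\<forall>i<n. \<forall>j<n. i \<noteq> j \<longrightarrow> - u i \<le> - v j \<or> - u j \<le> - v i" using no by force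
    moreover have "(\<Sum>k<n. - u k - - v k) < d" using s by (simp add: algebra_simps)
    ultimately have "(\<Sum>k<n. norm (F (- u k) - F (- v k))) < e" by (rule D)
    then show "(\<Sum>k<n. norm (F (- v k) - F (- u k))) < e" by (simp add: norm_minus_commute)
  qed (use \<open>d > 0\<close> in auto)
qed

lemma abs_cont_on_imp_continuous_on:
  assumes "abs_cont_on a b F"
  shows "continuous_on {a..b} F"
  unfolding continuous_on_iff
proof (intro ballI allI impI)
  fix x e :: real assume x: "x \<in> {a..b}" and "e > 0"
  then obtain d where d: "d > 0" and D: "\<And>(n::nat) u v. \<forall>k<n. a \<le> u k \<and> u k \<le> v k \<and> v k \<le> b \<Longrightarrow>
      \<forall>i<n. \<forall>j<n. i \<noteq> j \<longrightarrow> v i \<le> u j \<or> v j \<le> u i \<Longrightarrow>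
      (\<Sum>k<n. v k - u k) < d \<Longrightarrow> (\<Sum>k<n. norm (F (v k) - F (u k))) < e"
    using abs_cont_onE[OF assms] by blast
  show "\<exists>d>0. \<forall>y\<in>{a..b}. dist y x < d \<longrightarrow> dist (F y) (F x) < e"
  proof (intro exI[of _ d] conjI ballI impI)
    fix y assume "y \<in> {a..b}" "dist y x < d"
    then have "norm (F (max x y) - F (min x y)) < e"
      using D[of 1 "\<lambda>_. min x y" "\<lambda>_. max x y"] x by (auto simp: dist_real_def)
    then show "dist (F y) (F x) < e"
      by (cases "x \<le> y") (auto simp: dist_norm max_def min_def norm_minus_commute)
  qed (use d in auto)
qed

lemma abs_cont_on_bounded:
  assumes "abs_cont_on a b F"
  obtains B where "B \<ge> 0" "\<And>x. x \<in> {a..b} \<Longrightarrow> norm (F x) \<le> B"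
proof -
  have "compact (F ` {a..b})"
    by (rule compact_continuous_image[OF abs_cont_on_imp_continuous_on[OF assms]]) simp
  then obtain B where "B > 0" "\<forall>y\<in>F ` {a..b}. norm y \<le> B"
    using compact_imp_bounded bounded_pos by metis
  then show ?thesis using that[of B] by auto
qed

lemma abs_cont_on_mult:
  assumes F: "abs_cont_on a b F" and G: "abs_cont_on a b G"
  shows "abs_cont_on a b (\<lambda>x. F x * G x)"
proof -
  obtain BF where BF: "BF \<ge> 0" "\<And>x. x \<in> {a..b} \<Longrightarrow> norm (F x) \<le> BF"
    using abs_cont_on_bounded[OF F] by blast
  obtain BG where BG: "BG \<ge> 0" "\<And>x. x \<in> {a..b} \<Longrightarrow> norm (G x) \<le> BG"
    using abs_cont_on_bounded[OF G] by blast
  show ?thesis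
  proof (rule abs_cont_on_dominated[OF F G BG(1) BF(1)])
    fix u v assume uv: "a \<le> u" "u \<le> v" "v \<le> b"
    have "F v * G v - F u * G u = G v * (F v - F u) + F u * (G v - G u)" by (simp add: algebra_simps)
    then have "norm (F v * G v - F u * G u) \<le> norm (G v * (F v - F u)) + norm (F u * (G v - G u))"
      using norm_triangle_ineq by metis
    then have "norm (F v * G v - F u * G u) \<le> norm (G v) * norm (F v - F u) + norm (F u) * norm (G v - G u)"
      by (simp add: norm_mult)
    also have "\<dots> \<le> BG * norm (F v - F u) + BF * norm (G v - G u)"
      using uv BF BG by (intro add_mono mult_right_mono) auto
    finally show "norm (F v * G v - F u * G u) \<le> BG * norm (F v - F u) + BF * norm (G v - G u)" .
  qed
qed

lemma abs_cont_on_of_real_C1: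
  fixes \<phi> \<phi>' :: "real \<Rightarrow> real"
  assumes der: "\<And>t. t \<in> {a..b} \<Longrightarrow> (\<phi> has_real_derivative \<phi>' t) (at t)"
    and cont: "continuous_on {a..b} \<phi>'"
  shows "abs_cont_on a b (\<lambda>t. complex_of_real (\<phi> t))"
proof -
  have "compact (\<phi>' ` {a..b})" by (rule compact_continuous_image[OF cont]) simp
  then obtain L where L: "L > 0" "\<forall>y\<in>\<phi>' ` {a..b}. norm y \<le> L"
    using compact_imp_bounded bounded_pos by metis
  show ?thesis
  proof (rule abs_cont_on_lipschitz[of L])
    fix u v assume uv: "a \<le> u" "u \<le> v" "v \<le> b"
    show "norm (complex_of_real (\<phi> v) - complex_of_real (\<phi> u)) \<le> L * (v - u)"
    proof (cases "u = v")
      case False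
      then have "u < v" using uv by simp
      have "\<exists>l z. u < z \<and> z < v \<and> DERIV \<phi> z :> l \<and> \<phi> v - \<phi> u = (v - u) * l"
      proof (rule MVT[OF \<open>u < v\<close>])
        show "continuous_on {u..v} \<phi>"
          by (rule has_real_derivative_imp_continuous_on[where f'=\<phi>']) (use der uv in auto)
        show "\<phi> differentiable (at x)" if "u < x" "x < v" for x
          using der[of x] that uv real_differentiable_def by force
      qed
      then obtain l z where z: "u < z" "z < v" "DERIV \<phi> z :> l" "\<phi> v - \<phi> u = (v - u) * l" by blast
      have "l = \<phi>' z" using DERIV_unique[OF z(3) der[of z]] z uv by auto
      then have "\<bar>l\<bar> \<le> L" using L z uv by auto
      have "norm (complex_of_real (\<phi> v) - complex_of_real (\<phi> u)) = (v - u) * \<bar>l\<bar>"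
        using z(4) \<open>u < v\<close> by (simp add: abs_mult flip: of_real_diff of_real_mult)
      also have "\<dots> \<le> L * (v - u)" using \<open>\<bar>l\<bar> \<le> L\<close> \<open>u < v\<close> by (simp add: mult.commute)
      finally show ?thesis .
    qed simp
  qed (use L in simp)
qed

lemma pairwise_negligible_nonoverlapping:
  fixes u v :: "'i \<Rightarrow> real"
  assumes "\<forall>i\<in>I. \<forall>j\<in>I. i \<noteq> j \<longrightarrow> v i \<le> u j \<or> v j \<le> u i"
  shows "pairwise (\<lambda>i j. negligible ({u i..v i} \<inter> {u j..v j})) I"
proof (unfold pairwise_def, intro ballI impI)
  fix i j assume "i \<in> I" "j \<in> I" "i \<noteq> j"
  then have "v i \<le> u j \<or> v j \<le> u i" using assms by blast
  then have "{u i..v i} \<inter> {u j..v j} \<subseteq> {v i, u i}" by auto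
  then show "negligible ({u i..v i} \<inter> {u j..v j})"
    by (rule negligible_subset[rotated]) (simp add: negligible_insert)
qed

lemma integral_norm_le_square_mean:
  fixes f :: "real \<Rightarrow> 'a::euclidean_space"
  assumes f1: "(\<lambda>x. norm (f x)) integrable_on {u..v}" and f2: "(\<lambda>x. norm (f x)^2) integrable_on {u..v}"
    and "u \<le> v" "t > 0"
  shows "integral {u..v} (\<lambda>x. norm (f x)) \<le> (t * integral {u..v} (\<lambda>x. norm (f x)^2) + (v - u) / t) / 2"
proof -
  have am_gm: "norm (f x) \<le> (t * norm (f x)^2 + 1 / t) / 2" for x
  proof -
    have "0 \<le> (t * norm (f x) - 1)^2" by simp
    then have "t * (2 * norm (f x)) \<le> t * (t * norm (f x)^2 + 1 / t)"
      using \<open>t > 0\<close> by (simp add: power2_eq_square algebra_simps)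
    then show ?thesis using \<open>t > 0\<close> by simp
  qed
  have "((\<lambda>x. (t * norm (f x)^2 + 1 / t) / 2) has_integral
      (t * integral {u..v} (\<lambda>x. norm (f x)^2) + content {u..v} *\<^sub>R (1 / t)) / 2) {u..v}"
    by (intro has_integral_divide has_integral_add has_integral_mult_right integrable_integral f2
        has_integral_const_real)
  then have "integral {u..v} (\<lambda>x. norm (f x))
      \<le> (t * integral {u..v} (\<lambda>x. norm (f x)^2) + content {u..v} *\<^sub>R (1 / t)) / 2"
    by (rule has_integral_le[OF integrable_integral[OF f1]]) (use am_gm in auto)
  then show ?thesis using \<open>u \<le> v\<close> by simp
qed

lemma sum_integral_nonoverlapping_le:
  fixes h :: "real \<Rightarrow> real" and n :: nat
  assumes h: "h integrable_on {a..b}" and nonneg: "\<And>x. x \<in> {a..b} \<Longrightarrow> 0 \<le> h x"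
    and r: "\<forall>k<n. a \<le> u k \<and> u k \<le> v k \<and> v k \<le> b"
    and no: "\<forall>i<n. \<forall>j<n. i \<noteq> j \<longrightarrow> v i \<le> u j \<or> v j \<le> u i"
  shows "(\<Sum>k<n. integral {u k..v k} h) \<le> integral {a..b} h"
proof -
  have sub: "{u k..v k} \<subseteq> {a..b}" if "k < n" for k using r that by auto
  have hU: "(h has_integral (\<Sum>k<n. integral {u k..v k} h)) (\<Union>k<n. {u k..v k})"
  proof (rule has_integral_UN)
    show "(h has_integral (integral {u k..v k} h)) {u k..v k}" if "k \<in> {..<n}" for k
      using integrable_on_subinterval[OF h sub] that by blast
    show "pairwise (\<lambda>i j. negligible ({u i..v i} \<inter> {u j..v j})) {..<n}"
      using no by (intro pairwise_negligible_nonoverlapping) auto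
    show "finite {..<n}" by simp
  qed
  have "integral (\<Union>k<n. {u k..v k}) h \<le> integral {a..b} h"
  proof (rule integral_subset_le)
    show "(\<Union>k<n. {u k..v k}) \<subseteq> {a..b}" using sub by blast
  qed (use hU h nonneg in auto)
  then show ?thesis using hU by (simp add: integral_unique)
qed

lemma norm_integral_increment_le:
  fixes f :: "real \<Rightarrow> complex"
  assumes fa: "f absolutely_integrable_on {a..b}" and f2: "(\<lambda>x. norm (f x)^2) integrable_on {a..b}"
    and uv: "a \<le> u" "u \<le> v" "v \<le> b" and "t > 0"
  shows "norm (integral {a..v} f - integral {a..u} f)
    \<le> (t * integral {u..v} (\<lambda>x. norm (f x)^2) + (v - u) / t) / 2"
proof -
  have fi: "f integrable_on {a..b}" using fa by (auto dest: set_lebesgue_integral_eq_integral(1))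
  have fn: "(\<lambda>x. norm (f x)) integrable_on {a..b}" using fa absolutely_integrable_on_def by blast
  have "integral {a..u} f + integral {u..v} f = integral {a..v} f"
    by (rule Henstock_Kurzweil_Integration.integral_combine[OF uv(1,2)])
       (use integrable_on_subinterval[OF fi] uv in auto)
  then have "norm (integral {a..v} f - integral {a..u} f) = norm (integral {u..v} f)"
    by (metis add_diff_cancel_left')
  also have "\<dots> \<le> integral {u..v} (\<lambda>x. norm (f x))"
    by (rule integral_norm_bound_integral)
       (use integrable_on_subinterval[OF fi] integrable_on_subinterval[OF fn] uv in auto)
  also have "\<dots> \<le> (t * integral {u..v} (\<lambda>x. norm (f x)^2) + (v - u) / t) / 2"
    by (rule integral_norm_le_square_mean)
       (use integrable_on_subinterval[OF fn] integrable_on_subinterval[OF f2] uv \<open>t > 0\<close> in auto)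
  finally show ?thesis .
qed

lemma abs_cont_on_integral:
  fixes f :: "real \<Rightarrow> complex"
  assumes fa: "f absolutely_integrable_on {a..b}" and f2: "(\<lambda>x. norm (f x)^2) integrable_on {a..b}"
  shows "abs_cont_on a b (\<lambda>x. integral {a..x} f)"
proof (rule abs_cont_onI)
  fix e :: real assume e: "e > 0"
  define M where "M = integral {a..b} (\<lambda>x. norm (f x)^2)"
  have "M \<ge> 0" unfolding M_def by (rule integral_nonneg[OF f2]) simp
  define t where "t = e / (M + 1)"
  have t: "t > 0" using e \<open>M \<ge> 0\<close> by (simp add: t_def)
  have tM: "t * M < e"
    using e \<open>M \<ge> 0\<close> by (simp add: t_def field_simps)
  show "\<exists>d>0. \<forall>(n::nat) u v. (\<forall>k<n. a \<le> u k \<and> u k \<le> v k \<and> v k \<le> b) \<longrightarrow>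
      (\<forall>i<n. \<forall>j<n. i \<noteq> j \<longrightarrow> v i \<le> u j \<or> v j \<le> u i) \<longrightarrow>
      (\<Sum>k<n. v k - u k) < d \<longrightarrow> (\<Sum>k<n. norm (integral {a..v k} f - integral {a..u k} f)) < e"
  proof (intro exI[of _ "e * t"] conjI allI impI)
    fix n :: nat and u v :: "nat \<Rightarrow> real"
    assume r: "\<forall>k<n. a \<le> u k \<and> u k \<le> v k \<and> v k \<le> b"
      and no: "\<forall>i<n. \<forall>j<n. i \<noteq> j \<longrightarrow> v i \<le> u j \<or> v j \<le> u i"
      and s: "(\<Sum>k<n. v k - u k) < e * t"
    have "(\<Sum>k<n. norm (integral {a..v k} f - integral {a..u k} f))
        \<le> (\<Sum>k<n. (t * integral {u k..v k} (\<lambda>x. norm (f x)^2) + (v k - u k) / t) / 2)"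
      using r t by (intro sum_mono norm_integral_increment_le[OF fa f2]) auto
    also have "\<dots> = (t * (\<Sum>k<n. integral {u k..v k} (\<lambda>x. norm (f x)^2)) + (\<Sum>k<n. v k - u k) / t) / 2"
      by (simp add: sum.distrib sum_distrib_left sum_divide_distrib flip: sum_divide_distrib)
    also have "\<dots> < (e + e) / 2"
    proof -
      have "t * (\<Sum>k<n. integral {u k..v k} (\<lambda>x. norm (f x)^2)) \<le> t * M"
        unfolding M_def using sum_integral_nonoverlapping_le[OF f2 _ r no] t
        by (intro mult_left_mono) auto
      moreover have "(\<Sum>k<n. v k - u k) / t < e" using s t by (simp add: field_simps)
      ultimately show ?thesis using tM by (intro divide_strict_right_mono) linarith+
    qed
    finally show "(\<Sum>k<n. norm (integral {a..v k} f - integral {a..u k} f)) < e" by simp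
  qed (use e t in auto)
qed

section \<open>The fundamental theorem of calculus for absolutely continuous functions\<close>

lemma sum_interval_lengths_le_measure:
  fixes u v :: "'i \<Rightarrow> real"
  assumes I: "finite I" and sub: "\<forall>i\<in>I. u i \<le> v i \<and> {u i..v i} \<subseteq> T"
    and no: "\<forall>i\<in>I. \<forall>j\<in>I. i \<noteq> j \<longrightarrow> v i \<le> u j \<or> v j \<le> u i"
    and T: "T \<in> lmeasurable"
  shows "(\<Sum>i\<in>I. v i - u i) \<le> measure lebesgue T"
proof -
  have "measure lebesgue (\<Union>i\<in>I. {u i..v i}) = (\<Sum>i\<in>I. measure lebesgue {u i..v i})"
  proof (rule measure_negligible_finite_Union_image[OF I])
  qed (use pairwise_negligible_nonoverlapping[OF no] in auto)
  also have "\<dots> = (\<Sum>i\<in>I. v i - u i)"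
    by (rule sum.cong) (use sub in auto)
  finally have "measure lebesgue (\<Union>i\<in>I. {u i..v i}) = (\<Sum>i\<in>I. v i - u i)" .
  moreover have "measure lebesgue (\<Union>i\<in>I. {u i..v i}) \<le> measure lebesgue T"
    by (rule measure_mono_fmeasurable) (use sub I T in auto)
  ultimately show ?thesis by simp
qed

lemma negligible_imp_small_open_superset:
  assumes N: "negligible N" and "d > 0"
  obtains T where "open T" "N \<subseteq> T" "T \<in> lmeasurable" "measure lebesgue T < d"
proof -
  have "N \<in> sets lebesgue" using N negligible_imp_sets by blast
  then obtain T where T: "open T" "N \<subseteq> T" "T - N \<in> lmeasurable" "emeasure lebesgue (T - N) < ennreal d"
    using sets_lebesgue_outer_open \<open>d > 0\<close> by metis
  have NL: "N \<in> lmeasurable" using N negligible_imp_measurable by blast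
  have TU: "T = (T - N) \<union> N" using T(2) by auto
  have "T \<in> lmeasurable" using T(3) NL TU by (metis fmeasurable.Un)
  moreover have "measure lebesgue T \<le> measure lebesgue (T - N) + measure lebesgue N"
    using measure_Un_le[OF fmeasurableD[OF T(3)] fmeasurableD[OF NL]] TU by simp
  moreover have "measure lebesgue (T - N) < d"
    using T(4) emeasure_eq_measure2[OF T(3)] \<open>d > 0\<close> by (simp add: ennreal_less_iff)
  ultimately show ?thesis using that T(1,2) negligible_imp_measure0[OF N] by simp
qed

lemma tagged_division_interval_form:
  fixes a b :: real
  assumes "\<D> tagged_division_of {a..b}" "(x,K) \<in> \<D>"
  obtains u v where "K = {u..v}" "u \<le> x" "x \<le> v" "a \<le> u" "v \<le> b"
proof -
  obtain u v where "K = cbox u v" using assms by (meson tagged_division_ofD(4))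
  then have K: "K = {u..v}" by (simp add: cbox_interval)
  have "x \<in> K" "K \<subseteq> {a..b}" using assms by (blast dest: tagged_division_ofD)+
  then show ?thesis using that K by auto
qed

lemma tagged_division_sum_derivative_approx:
  fixes F h :: "real \<Rightarrow> 'a::real_normed_vector"
  assumes D: "\<D> tagged_division_of {a..b}" and "D' \<subseteq> \<D>" "a \<le> b" "\<eta> \<ge> 0"
    and approx: "\<And>x K y. (x,K) \<in> D' \<Longrightarrow> y \<in> K \<Longrightarrow> norm (F y - F x - (y - x) *\<^sub>R h x) \<le> \<eta> * \<bar>y - x\<bar>"
  shows "norm (\<Sum>(x,K)\<in>D'. content K *\<^sub>R h x - (F (Sup K) - F (Inf K))) \<le> \<eta> * (b - a)"
proof -
  have fin: "finite \<D>" using D by blast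
  have "norm (\<Sum>(x,K)\<in>D'. content K *\<^sub>R h x - (F (Sup K) - F (Inf K))) \<le> (\<Sum>(x,K)\<in>D'. \<eta> * content K)"
  proof (rule sum_norm_le, clarify)
    fix x K assume xK: "(x,K) \<in> D'"
    then have "(x,K) \<in> \<D>" using \<open>D' \<subseteq> \<D>\<close> by blast
    then obtain u v where K: "K = {u..v}" "u \<le> x" "x \<le> v"
      by (rule tagged_division_interval_form[OF D])
    have "u \<in> K" "v \<in> K" using K by auto
    have "(v - u) *\<^sub>R h x - (F v - F u) = (F u - F x - (u - x) *\<^sub>R h x) - (F v - F x - (v - x) *\<^sub>R h x)"
      by (simp add: algebra_simps)
    then have "norm ((v - u) *\<^sub>R h x - (F v - F u))
        \<le> norm (F u - F x - (u - x) *\<^sub>R h x) + norm (F v - F x - (v - x) *\<^sub>R h x)"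
      by (simp only: norm_triangle_ineq4)
    also have "\<dots> \<le> \<eta> * \<bar>u - x\<bar> + \<eta> * \<bar>v - x\<bar>"
      using approx[OF xK \<open>u \<in> K\<close>] approx[OF xK \<open>v \<in> K\<close>] by (rule add_mono)
    also have "\<dots> = \<eta> * (v - u)" using K by (simp add: algebra_simps)
    finally show "norm (content K *\<^sub>R h x - (F (Sup K) - F (Inf K))) \<le> \<eta> * content K"
      using K by simp
  qed
  also have "\<dots> \<le> (\<Sum>(x,K)\<in>\<D>. \<eta> * content K)"
    by (rule sum_mono2[OF fin \<open>D' \<subseteq> \<D>\<close>]) (use \<open>\<eta> \<ge> 0\<close> in auto)
  also have "\<dots> = \<eta> * (b - a)"
    using additive_content_tagged_division[of \<D> a b] D \<open>a \<le> b\<close>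
    by (simp add: sum_distrib_left[symmetric] split_def)
  finally show ?thesis .
qed

lemma tagged_division_nonoverlapping:
  fixes a b :: real
  assumes D: "\<D> tagged_division_of {a..b}" and "(x,K) \<in> \<D>" "(y,L) \<in> \<D>" "(x,K) \<noteq> (y,L)"
    and "Inf K < Sup K" "Inf L < Sup L"
  shows "Sup K \<le> Inf L \<or> Sup L \<le> Inf K"
proof (rule ccontr)
  obtain u v where K: "K = {u..v}" "u \<le> v" using D \<open>(x,K) \<in> \<D>\<close> by (elim tagged_division_interval_form) auto
  obtain u' v' where L: "L = {u'..v'}" "u' \<le> v'" using D \<open>(y,L) \<in> \<D>\<close> by (elim tagged_division_interval_form) auto
  have "interior K \<inter> interior L = {}" using tagged_division_ofD(5)[OF assms(1-4)] .
  then have disj: "{u<..<v} \<inter> {u'<..<v'} = {}" using K L by simp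
  assume "\<not> (Sup K \<le> Inf L \<or> Sup L \<le> Inf K)"
  then have "(max u u' + min v v') / 2 \<in> {u<..<v} \<inter> {u'<..<v'}"
    using K L assms(5,6) by auto
  with disj show False by blast
qed

lemma derivative_gauge:
  fixes F :: "real \<Rightarrow> 'a::real_normed_vector"
  assumes der: "\<And>x. x \<in> S \<Longrightarrow> (F has_vector_derivative h x) (at x)" and "\<eta> > 0" and "open T"
  obtains \<delta> where "\<And>x. \<delta> x > 0"
    "\<And>x y. x \<in> S \<Longrightarrow> \<bar>y - x\<bar> < \<delta> x \<Longrightarrow> norm (F y - F x - (y - x) *\<^sub>R h x) \<le> \<eta> * \<bar>y - x\<bar>"
    "\<And>x. x \<in> T \<Longrightarrow> ball x (\<delta> x) \<subseteq> T"
proof -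
  have "\<exists>\<delta>>0. (x \<in> S \<longrightarrow> (\<forall>y. \<bar>y - x\<bar> < \<delta> \<longrightarrow> norm (F y - F x - (y - x) *\<^sub>R h x) \<le> \<eta> * \<bar>y - x\<bar>))
      \<and> (x \<in> T \<longrightarrow> ball x \<delta> \<subseteq> T)" for x
  proof -
    obtain \<delta>1 where "\<delta>1 > 0"
      and \<delta>1: "x \<in> S \<Longrightarrow> \<forall>y. \<bar>y - x\<bar> < \<delta>1 \<longrightarrow> norm (F y - F x - (y - x) *\<^sub>R h x) \<le> \<eta> * \<bar>y - x\<bar>"
    proof (cases "x \<in> S")
      case True
      then have "(F has_derivative (\<lambda>t. t *\<^sub>R h x)) (at x)"
        using der has_vector_derivative_def by blast
      then show ?thesis using that \<open>\<eta> > 0\<close> unfolding has_derivative_at_alt by fastforce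
    qed (use that[of 1] in auto)
    obtain \<delta>2 where "\<delta>2 > 0" and \<delta>2: "x \<in> T \<Longrightarrow> ball x \<delta>2 \<subseteq> T"
      using \<open>open T\<close> open_contains_ball by (cases "x \<in> T") blast+
    have "ball x (min \<delta>1 \<delta>2) \<subseteq> ball x \<delta>2" by auto
    then show ?thesis
      using \<open>\<delta>1 > 0\<close> \<open>\<delta>2 > 0\<close> \<delta>1 \<delta>2 by (intro exI[of _ "min \<delta>1 \<delta>2"]) auto
  qed
  then obtain \<delta> where "\<forall>x. \<delta> x > 0 \<and> (x \<in> S \<longrightarrow> (\<forall>y. \<bar>y - x\<bar> < \<delta> x \<longrightarrow>
      norm (F y - F x - (y - x) *\<^sub>R h x) \<le> \<eta> * \<bar>y - x\<bar>)) \<and> (x \<in> T \<longrightarrow> ball x (\<delta> x) \<subseteq> T)"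
    by metis
  then show ?thesis using that by blast
qed

lemma abs_cont_on_tagged_subdivisionE:
  fixes F :: "real \<Rightarrow> complex" and a b :: real
  assumes ac: "abs_cont_on a b F" and "e > 0"
  obtains d where "d > 0" "\<And>\<D> D' T. \<D> tagged_division_of {a..b} \<Longrightarrow> D' \<subseteq> \<D> \<Longrightarrow> T \<in> lmeasurable \<Longrightarrow>
      measure lebesgue T < d \<Longrightarrow> \<forall>(x,K)\<in>D'. K \<subseteq> T \<Longrightarrow>
      (\<Sum>(x,K)\<in>D'. norm (F (Sup K) - F (Inf K))) < e"
proof -
  obtain d where "d > 0" and small: "\<And>(I :: (real \<times> real set) set) u v. finite I \<Longrightarrow>
      \<forall>i\<in>I. a \<le> u i \<and> u i \<le> v i \<and> v i \<le> b \<Longrightarrow> \<forall>i\<in>I. \<forall>j\<in>I. i \<noteq> j \<longrightarrow> v i \<le> u j \<or> v j \<le> u i \<Longrightarrow>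
      (\<Sum>i\<in>I. v i - u i) < d \<Longrightarrow> (\<Sum>i\<in>I. norm (F (v i) - F (u i))) < e"
    by (rule abs_cont_on_indexedE[OF ac \<open>e > 0\<close>]) (rule that)
  show ?thesis
  proof (rule that[OF \<open>d > 0\<close>])
    fix \<D> D' T
    assume D: "\<D> tagged_division_of {a..b}" and "D' \<subseteq> \<D>" and T: "T \<in> lmeasurable" "measure lebesgue T < d"
      and in_T: "\<forall>(x,K)\<in>D'. K \<subseteq> T"
    \<comment> \<open>degenerate intervals contribute nothing, and the others do not overlap\<close>
    define nondeg where "nondeg = {p \<in> D'. Inf (snd p) < Sup (snd p)}"
    have fin: "finite D'" using D \<open>D' \<subseteq> \<D>\<close> finite_subset by blast
    have form: "a \<le> Inf K \<and> Inf K \<le> Sup K \<and> Sup K \<le> b \<and> K = {Inf K..Sup K}" if "(x,K) \<in> D'" for x K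
      using D \<open>D' \<subseteq> \<D>\<close> that by (elim tagged_division_interval_form) auto
    have "(\<Sum>(x,K)\<in>D'. norm (F (Sup K) - F (Inf K))) = (\<Sum>p\<in>nondeg. norm (F (Sup (snd p)) - F (Inf (snd p))))"
      unfolding split_def
      by (rule sum.mono_neutral_right[OF fin]) (use form in \<open>fastforce simp: nondeg_def\<close>)+
    also have "\<dots> < e"
    proof (rule small)
      show "finite nondeg" using fin by (simp add: nondeg_def)
      show "\<forall>p\<in>nondeg. a \<le> Inf (snd p) \<and> Inf (snd p) \<le> Sup (snd p) \<and> Sup (snd p) \<le> b"
        using form by (fastforce simp: nondeg_def)
      show "\<forall>p\<in>nondeg. \<forall>q\<in>nondeg. p \<noteq> q \<longrightarrow> Sup (snd p) \<le> Inf (snd q) \<or> Sup (snd q) \<le> Inf (snd p)"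
        using tagged_division_nonoverlapping[OF D] \<open>D' \<subseteq> \<D>\<close> by (fastforce simp: nondeg_def)
      have "(\<Sum>p\<in>nondeg. Sup (snd p) - Inf (snd p)) \<le> measure lebesgue T"
      proof (rule sum_interval_lengths_le_measure[OF _ _ _ T(1)])
        show "\<forall>p\<in>nondeg. Inf (snd p) \<le> Sup (snd p) \<and> {Inf (snd p)..Sup (snd p)} \<subseteq> T"
          using form in_T by (fastforce simp: nondeg_def)
      qed fact+
      then show "(\<Sum>p\<in>nondeg. Sup (snd p) - Inf (snd p)) < d" using T(2) by linarith
    qed
    finally show "(\<Sum>(x,K)\<in>D'. norm (F (Sup K) - F (Inf K))) < e" .
  qed
qed

text \<open>Henstock's proof: away from the exceptional set the gauge comes from differentiability, on it
  the gauge keeps the tagged intervals inside an open set of small measure.\<close>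

lemma has_integral_derivative_abs_cont:
  fixes F h :: "real \<Rightarrow> complex"
  assumes ab: "a \<le> b" and ac: "abs_cont_on a b F" and N: "negligible N"
    and der: "\<And>x. x \<in> {a<..<b} - N \<Longrightarrow> (F has_vector_derivative h x) (at x)"
  shows "(h has_integral (F b - F a)) {a..b}"
proof -
  define N' where "N' = N \<union> {a,b}"
  have N': "negligible N'" using N by (simp add: N'_def negligible_insert)
  define h0 where "h0 x = (if x \<in> N' then 0 else h x)" for x
  have "(h0 has_integral (F b - F a)) {a..b}"
    unfolding has_integral_real
  proof (intro allI impI)
    fix e :: real assume e: "e > 0"
    obtain d where "d > 0" and small: "\<And>\<D> D' T. \<D> tagged_division_of {a..b} \<Longrightarrow> D' \<subseteq> \<D> \<Longrightarrow>
        T \<in> lmeasurable \<Longrightarrow> measure lebesgue T < d \<Longrightarrow> \<forall>(x,K)\<in>D'. K \<subseteq> T \<Longrightarrow>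
        (\<Sum>(x,K)\<in>D'. norm (F (Sup K) - F (Inf K))) < e/2"
      using e by (rule abs_cont_on_tagged_subdivisionE[OF ac half_gt_zero]) (rule that)
    obtain T where T: "open T" "N' \<subseteq> T" "T \<in> lmeasurable" "measure lebesgue T < d"
      using negligible_imp_small_open_superset[OF N' \<open>d > 0\<close>] .
    define \<eta> where "\<eta> = e / (2 * (b - a + 1))"
    have "\<eta> > 0" and \<eta>_small: "\<eta> * (b - a) < e/2"
      using e ab by (auto simp: \<eta>_def field_simps)
    obtain \<delta> where \<delta>: "\<And>x. \<delta> x > 0"
      and \<delta>_der: "\<And>x y. x \<in> {a..b} - N' \<Longrightarrow> \<bar>y - x\<bar> < \<delta> x \<Longrightarrow>
          norm (F y - F x - (y - x) *\<^sub>R h x) \<le> \<eta> * \<bar>y - x\<bar>"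
      and \<delta>_T: "\<And>x. x \<in> T \<Longrightarrow> ball x (\<delta> x) \<subseteq> T"
      by (rule derivative_gauge[OF _ \<open>\<eta> > 0\<close> \<open>open T\<close>, of "{a..b} - N'" F h]) (use der N'_def in auto)
    show "\<exists>\<gamma>. gauge \<gamma> \<and> (\<forall>\<D>. \<D> tagged_division_of {a..b} \<and> \<gamma> fine \<D> \<longrightarrow>
        norm ((\<Sum>(x,K)\<in>\<D>. content K *\<^sub>R h0 x) - (F b - F a)) < e)"
    proof (intro exI conjI allI impI)
      show "gauge (\<lambda>x. ball x (\<delta> x))" using \<delta> gauge_ball_dependent by blast
      fix \<D> assume "\<D> tagged_division_of {a..b} \<and> (\<lambda>x. ball x (\<delta> x)) fine \<D>"
      then have D: "\<D> tagged_division_of {a..b}" and fine: "\<And>x K. (x,K) \<in> \<D> \<Longrightarrow> K \<subseteq> ball x (\<delta> x)"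
        by (auto simp: fine_def)
      define t where "t = (\<lambda>(x,K). content K *\<^sub>R h0 x - (F (Sup K) - F (Inf K)))"
      define D1 where "D1 = {p \<in> \<D>. fst p \<notin> N'}"
      define D2 where "D2 = {p \<in> \<D>. fst p \<in> N'}"
      have "(\<Sum>(x,K)\<in>\<D>. content K *\<^sub>R h0 x) - (F b - F a) = (\<Sum>p\<in>\<D>. t p)"
        using additive_tagged_division_1[OF ab D, of F] by (simp add: t_def sum_subtractf split_def)
      also have "\<dots> = (\<Sum>p\<in>D1. t p) + (\<Sum>p\<in>D2. t p)"
        using D by (subst sum.union_disjoint[symmetric]) (auto simp: D1_def D2_def intro: sum.cong)
      finally have split: "(\<Sum>(x,K)\<in>\<D>. content K *\<^sub>R h0 x) - (F b - F a) = (\<Sum>p\<in>D1. t p) + (\<Sum>p\<in>D2. t p)" .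
      have "(\<Sum>p\<in>D1. t p) = (\<Sum>(x,K)\<in>D1. content K *\<^sub>R h x - (F (Sup K) - F (Inf K)))"
        by (rule sum.cong) (auto simp: t_def h0_def D1_def)
      also have "norm \<dots> \<le> \<eta> * (b - a)"
      proof (rule tagged_division_sum_derivative_approx[OF D _ ab])
        fix x K y assume "(x,K) \<in> D1" "y \<in> K"
        moreover have "x \<in> K" "K \<subseteq> {a..b}" "K \<subseteq> ball x (\<delta> x)"
          using \<open>(x,K) \<in> D1\<close> D fine by (auto simp: D1_def dest: tagged_division_ofD)
        ultimately show "norm (F y - F x - (y - x) *\<^sub>R h x) \<le> \<eta> * \<bar>y - x\<bar>"
          by (intro \<delta>_der) (auto simp: D1_def dist_real_def)
      qed (use \<open>\<eta> > 0\<close> in \<open>auto simp: D1_def\<close>)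
      finally have "norm (\<Sum>p\<in>D1. t p) \<le> \<eta> * (b - a)" .
      moreover have "norm (\<Sum>p\<in>D2. t p) \<le> (\<Sum>(x,K)\<in>D2. norm (F (Sup K) - F (Inf K)))"
        by (rule sum_norm_le) (auto simp: D2_def t_def h0_def norm_minus_commute)
      moreover have "(\<Sum>(x,K)\<in>D2. norm (F (Sup K) - F (Inf K))) < e/2"
      proof (rule small[OF D _ T(3,4)])
        show "\<forall>(x,K)\<in>D2. K \<subseteq> T"
          using fine \<delta>_T T(2) by (fastforce simp: D2_def)
      qed (auto simp: D2_def)
      ultimately show "norm ((\<Sum>(x,K)\<in>\<D>. content K *\<^sub>R h0 x) - (F b - F a)) < e"
        unfolding split using \<eta>_small norm_triangle_ineq[of "\<Sum>p\<in>D1. t p" "\<Sum>p\<in>D2. t p"] by linarith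
    qed
  qed
  then show ?thesis
    by (rule has_integral_spike[OF N', rotated]) (auto simp: h0_def)
qed

lemma integrable_Om_iff:
  fixes f :: "real \<Rightarrow> 'a::euclidean_space"
  shows "integrable Om f \<longleftrightarrow> f absolutely_integrable_on {-pi..pi}"
proof -
  have "integrable Om f \<longleftrightarrow> f absolutely_integrable_on {-pi<..<pi}"
    unfolding Om_def set_integrable_def by (simp add: integrable_restrict_space)
  then show ?thesis by (simp add: absolutely_integrable_on_Icc_iff_Ioo)
qed

lemma sq_int_absolutely_integrable:
  assumes "sq_int u"
  shows "u absolutely_integrable_on {-pi..pi}"
proof -
  have "u \<in> borel_measurable (lebesgue_on {-pi<..<pi})" using assms by (simp add: sq_int_def Om_def)
  moreover have "(\<lambda>x. norm (u x)^2) absolutely_integrable_on {-pi<..<pi}"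
    using assms by (simp add: sq_int_def integrable_Om_iff absolutely_integrable_on_Icc_iff_Ioo)
  then have "(\<lambda>x. 1 + norm (u x)^2) integrable_on {-pi<..<pi}"
    by (intro integrable_add integrable_on_const)
       (auto simp: lmeasurable_open dest: set_lebesgue_integral_eq_integral(1))
  moreover have "norm (u x) \<le> 1 + norm (u x)^2" for x
    using sum_squares_ge_zero[of "norm (u x) - 1/2" 0] by (simp add: power2_eq_square algebra_simps)
  ultimately have "u absolutely_integrable_on {-pi<..<pi}"
    by (intro measurable_bounded_by_integrable_imp_absolutely_integrable) auto
  then show ?thesis by (simp add: absolutely_integrable_on_Icc_iff_Ioo)
qed

lemma sq_int_norm_square_integrable:
  assumes "sq_int u"
  shows "(\<lambda>x. norm (u x)^2) integrable_on {-pi..pi}"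
  using assms by (auto simp: sq_int_def integrable_Om_iff dest: set_lebesgue_integral_eq_integral(1))

lemma sq_intI:
  assumes "u \<in> borel_measurable Om" "(\<lambda>x. norm (u x)^2) integrable_on {-pi..pi}"
  shows "sq_int u"
  using assms nonnegative_absolutely_integrable_1[OF assms(2)]
  by (simp add: sq_int_def integrable_Om_iff)

lemma AE_Om_E:
  assumes "AE x in Om. P x"
  obtains N where "negligible N" "\<And>x. x \<in> {-pi<..<pi} - N \<Longrightarrow> P x"
proof -
  have "AE x in lebesgue. x \<in> {-pi<..<pi} \<longrightarrow> P x"
    using assms unfolding Om_def by (simp add: AE_restrict_space_iff)
  then obtain N where N: "{x \<in> space lebesgue. \<not> (x \<in> {-pi<..<pi} \<longrightarrow> P x)} \<subseteq> N"
    "emeasure lebesgue N = 0" "N \<in> sets lebesgue"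
    by (rule AE_E)
  then have "N \<in> null_sets lebesgue" by (intro null_setsI)
  with N(1) show ?thesis using that by (auto simp: negligible_iff_null_sets)
qed

lemma AE_OmI:
  assumes "negligible N" "\<And>x. x \<in> {-pi<..<pi} - N \<Longrightarrow> P x"
  shows "AE x in Om. P x"
proof -
  have "AE x in lebesgue. x \<in> {-pi<..<pi} \<longrightarrow> P x"
    by (rule AE_I'[of N]) (use assms in \<open>auto simp: negligible_iff_null_sets\<close>)
  then show ?thesis unfolding Om_def by (simp add: AE_restrict_space_iff)
qed

section \<open>The integrating factor\<close>

text \<open>On \<open>(0, pi)\<close> this is \<open>tan (t/2) powr (1/\<epsilon>)\<close>; it solves \<open>w' = w / (\<epsilon> sin t)\<close>, so that
  \<open>\<epsilon> (sin t * y')' + y' = f\<close> becomes \<open>(w * sin t * y')' = w f / \<epsilon>\<close>.\<close>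

definition weight :: "real \<Rightarrow> real \<Rightarrow> real" where
  "weight \<epsilon> t = exp (ln ((1 - cos t) / sin t) / \<epsilon>)"

lemma weight_pos: "0 < weight \<epsilon> t"
  by (simp add: weight_def)

lemma weight_has_real_derivative:
  assumes "0 < t" "t < pi" "\<epsilon> \<noteq> 0"
  shows "(weight \<epsilon> has_real_derivative (weight \<epsilon> t / (\<epsilon> * sin t))) (at t)"
proof -
  have s: "sin t > 0" using assms by (simp add: sin_gt_zero)
  have c: "1 - cos t > 0" using assms cos_monotone_0_pi[of 0 t] by simp
  have d1: "((\<lambda>t. (1 - cos t) / sin t) has_real_derivative ((1 - cos t) / (sin t)^2)) (at t)"
  proof -
    have "((\<lambda>t. (1 - cos t) / sin t) has_real_derivative
          ((sin t * sin t - (1 - cos t) * cos t) / (sin t * sin t))) (at t)"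
      using s by (auto intro!: derivative_eq_intros)
    moreover have "sin t * sin t - (1 - cos t) * cos t = 1 - cos t"
      using sin_cos_squared_add[of t] by (simp add: power2_eq_square algebra_simps)
    ultimately show ?thesis by (simp add: power2_eq_square)
  qed
  have "((\<lambda>t. ln ((1 - cos t) / sin t) / \<epsilon>) has_real_derivative
       (inverse ((1 - cos t) / sin t) * ((1 - cos t) / (sin t)^2) / \<epsilon>)) (at t)"
    using s c by (intro DERIV_cdivide DERIV_chain2[OF DERIV_ln d1]) simp
  moreover have "inverse ((1 - cos t) / sin t) * ((1 - cos t) / (sin t)^2) / \<epsilon> = 1 / (\<epsilon> * sin t)"
    using s c assms(3) by (simp add: field_simps power2_eq_square)
  ultimately have "((\<lambda>t. ln ((1 - cos t) / sin t) / \<epsilon>) has_real_derivative 1 / (\<epsilon> * sin t)) (at t)"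
    by simp
  from DERIV_chain2[OF DERIV_exp this] show ?thesis
    unfolding weight_def[abs_def] by (simp add: weight_def)
qed

lemma weight_mono:
  assumes "0 < s" "s \<le> t" "t < pi" "0 < \<epsilon>"
  shows "weight \<epsilon> s \<le> weight \<epsilon> t"
proof (rule DERIV_nonneg_imp_nondecreasing[OF \<open>s \<le> t\<close>])
  fix x assume "s \<le> x" "x \<le> t"
  then have "0 < x" "x < pi" using assms by auto
  then show "\<exists>y. DERIV (weight \<epsilon>) x :> y \<and> 0 \<le> y"
    using assms weight_has_real_derivative[of x \<epsilon>] weight_pos[of \<epsilon> x] sin_gt_zero[of x]
    by (intro exI[of _ "weight \<epsilon> x / (\<epsilon> * sin x)"]) auto
qed

lemma weight_le_one:
  assumes "0 < t" "t \<le> pi/2" "0 < \<epsilon>"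
  shows "weight \<epsilon> t \<le> 1"
  using weight_mono[of t "pi/2" \<epsilon>] assms by (simp add: weight_def)

lemma abs_cont_on_weight:
  assumes "0 < a" "b < pi" "0 < \<epsilon>"
  shows "abs_cont_on a b (\<lambda>t. complex_of_real (weight \<epsilon> t))"
proof (rule abs_cont_on_of_real_C1)
  have in_0_pi: "0 < t" "t < pi" if "t \<in> {a..b}" for t using that assms by auto
  show "(weight \<epsilon> has_real_derivative weight \<epsilon> t / (\<epsilon> * sin t)) (at t)" if "t \<in> {a..b}" for t
    using in_0_pi[OF that] assms by (intro weight_has_real_derivative) auto
  then have "continuous_on {a..b} (weight \<epsilon>)"
    by (rule has_real_derivative_imp_continuous_on)
  moreover have "\<epsilon> * sin t \<noteq> 0" if "t \<in> {a..b}" for t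
    using in_0_pi[OF that] assms sin_gt_zero[of t] by simp
  ultimately show "continuous_on {a..b} (\<lambda>t. weight \<epsilon> t / (\<epsilon> * sin t))"
    by (intro continuous_intros) auto
qed

section \<open>Square integrability of \<open>y'\<close> on \<open>(0, pi)\<close>\<close>

lemma sin_ge_half_x:
  assumes "0 \<le> x" "x \<le> pi/3"
  shows "x/2 \<le> sin x"
proof -
  have "(\<lambda>t. sin t - t/2) 0 \<le> (\<lambda>t. sin t - t/2) x"
  proof (rule DERIV_nonneg_imp_increasing_open[OF assms(1)])
    fix t assume t: "0 < t" "t < x"
    have "cos (pi/3) \<le> cos t"
      using t assms by (intro cos_monotone_0_pi_le) auto
    then have "cos t - 1/2 \<ge> 0" by (simp add: cos_60)
    moreover have "DERIV (\<lambda>t. sin t - t/2) t :> cos t - 1/2"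
      by (auto intro!: derivative_eq_intros)
    ultimately show "\<exists>y. DERIV (\<lambda>t. sin t - t/2) t :> y \<and> 0 \<le> y" by blast
  qed (intro continuous_intros; simp)
  then show ?thesis by simp
qed

lemma abs_cont_on_inverse_sin:
  assumes "0 < a" "b < pi"
  shows "abs_cont_on a b (\<lambda>t. complex_of_real (1 / sin t))"
proof (rule abs_cont_on_of_real_C1)
  have sin_pos: "sin t > 0" if "t \<in> {a..b}" for t
    using that assms by (intro sin_gt_zero) auto
  show "((\<lambda>t. 1 / sin t) has_real_derivative (- cos t / (sin t)^2)) (at t)" if "t \<in> {a..b}" for t
    using sin_pos[OF that] by (auto intro!: derivative_eq_intros simp: power2_eq_square)
  show "continuous_on {a..b} (\<lambda>t. - cos t / (sin t)^2)"
    using sin_pos by (intro continuous_intros) force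
qed

lemma bounded_antiderivative_no_reciprocal_bound:
  fixes Y g :: "real \<Rightarrow> complex"
  assumes "C > 0" "0 < x" "negligible N"
    and Yint: "\<And>s. 0 < s \<Longrightarrow> s \<le> x \<Longrightarrow> (g has_integral (Y x - Y s)) {s..x}"
    and YB: "\<And>s. 0 < s \<Longrightarrow> s \<le> x \<Longrightarrow> norm (Y s) \<le> B"
    and lb: "\<And>t. t \<in> {0<..<x} - N \<Longrightarrow> C / t \<le> Re (c * g t)"
  shows False
proof -
  have "B \<ge> 0" using YB[of x] \<open>0 < x\<close> norm_ge_zero[of "Y x"] by linarith
  define K where "K = 2 * B * norm c / C + 1"
  define s where "s = x * exp (- K)"
  have "K > 0" using \<open>B \<ge> 0\<close> \<open>C > 0\<close> by (simp add: K_def add_nonneg_pos)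
  then have s: "0 < s" "s < x" using \<open>0 < x\<close> by (auto simp: s_def)
  have "ln x - ln s = K" using \<open>0 < x\<close> by (simp add: s_def ln_mult)
  have "((\<lambda>t. C * inverse t) has_integral (C * ln x - C * ln s)) {s..x}"
  proof (rule fundamental_theorem_of_calculus)
    fix t assume "t \<in> {s..x}"
    then have "t > 0" using s by auto
    then show "((\<lambda>t. C * ln t) has_vector_derivative C * inverse t) (at t within {s..x})"
      by (auto intro!: derivative_eq_intros has_vector_derivative_at_within
          simp: has_real_derivative_iff_has_vector_derivative[symmetric] divide_inverse)
  qed (use s in auto)
  then have hL: "((\<lambda>t. C / t) has_integral (C * K)) {s..x}"
    using \<open>ln x - ln s = K\<close> by (simp add: divide_inverse right_diff_distrib[symmetric])
  have "((\<lambda>t. Re (c * g t)) has_integral Re (c * (Y x - Y s))) {s..x}"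
    using has_integral_linear[OF Yint[OF s(1) order.strict_implies_order[OF s(2)]]
        bounded_linear_compose[OF bounded_linear_Re bounded_linear_mult_right]]
    by (simp add: o_def)
  then have "((\<lambda>t. if t \<in> N \<union> {x} then C / t else Re (c * g t)) has_integral Re (c * (Y x - Y s))) {s..x}"
    by (rule has_integral_spike[where S="N \<union> {x}", rotated 2]) (use \<open>negligible N\<close> in auto)
  then have "C * K \<le> Re (c * (Y x - Y s))"
    by (rule has_integral_le[OF hL]) (use lb s in auto)
  also have "\<dots> \<le> norm (c * (Y x - Y s))" using abs_Re_le_cmod abs_le_iff by blast
  also have "\<dots> \<le> norm c * (norm (Y x) + norm (Y s))"
    unfolding norm_mult by (intro mult_left_mono norm_triangle_ineq4) simp
  also have "\<dots> \<le> norm c * (2 * B)"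
    using YB[of x] YB[of s] s \<open>0 < x\<close> by (intro mult_left_mono) auto
  finally have "K \<le> 2 * B * norm c / C" using \<open>C > 0\<close> by (simp add: field_simps)
  then show False by (simp add: K_def)
qed

lemma integrable_on_0_pi_if_integrals_bounded:
  fixes \<phi> :: "real \<Rightarrow> real"
  assumes int: "\<And>a b. 0 < a \<Longrightarrow> b < pi \<Longrightarrow> \<phi> integrable_on {a..b}"
    and nonneg: "\<And>t. 0 < t \<Longrightarrow> t < pi \<Longrightarrow> 0 \<le> \<phi> t"
    and bound: "\<And>a b. 0 < a \<Longrightarrow> a \<le> pi/3 \<Longrightarrow> a \<le> b \<Longrightarrow> b < pi \<Longrightarrow> integral {a..b} \<phi> \<le> C"
  shows "\<phi> integrable_on {0..pi}"
proof -
  define a where "a n = pi / (3 * (real n + 1))" for n :: nat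
  define b where "b n = pi - a n" for n
  have a_pos: "0 < a n" for n by (simp add: a_def)
  have a_le: "a n \<le> pi/3" for n
    unfolding a_def using pi_gt_zero by (intro divide_left_mono) auto
  have b_lt: "b n < pi" and ab: "a n \<le> b n" for n
    using a_pos[of n] a_le[of n] by (auto simp: b_def)
  have a_mono: "a (Suc n) \<le> a n" for n
    unfolding a_def using pi_gt_zero by (intro divide_left_mono) auto
  define h where "h n t = (if t \<in> {a n..b n} then \<phi> t else 0)" for n t
  define \<Phi> where "\<Phi> t = (if t \<in> {0<..<pi} then \<phi> t else 0)" for t
  have sub: "{a n..b n} \<inter> {0..pi} = {a n..b n}" for n using a_pos[of n] b_lt[of n] by auto
  have h_int: "h n integrable_on {0..pi}" for n
    unfolding h_def integrable_restrict_Int sub using int[OF a_pos b_lt] .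
  have h_mono: "h n t \<le> h (Suc n) t" if "t \<in> {0..pi}" for n t
    using a_mono[of n] a_pos[of "Suc n"] b_lt[of "Suc n"] nonneg[of t]
    by (auto simp: h_def b_def)
  have h_lim: "(\<lambda>n. h n t) \<longlonglongrightarrow> \<Phi> t" if "t \<in> {0..pi}" for t
  proof (cases "t \<in> {0<..<pi}")
    case True
    define m where "m = min t (pi - t)"
    have m: "m > 0" using True by (simp add: m_def)
    obtain n0 :: nat where n0: "pi / (3 * m) < real n0" using reals_Archimedean2 by blast
    have "h n t = \<Phi> t" if "n0 \<le> n" for n
    proof -
      have "pi < real n0 * (3 * m)" using n0 m by (simp add: field_simps)
      also have "\<dots> \<le> (real n + 1) * (3 * m)"
        using that m by (intro mult_right_mono) auto
      finally have "a n < m" unfolding a_def using m by (simp add: field_simps)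
      then have "t \<in> {a n..b n}" by (auto simp: b_def m_def)
      then show ?thesis using True by (simp add: h_def \<Phi>_def)
    qed
    then show ?thesis by (intro tendsto_eventually eventually_sequentiallyI)
  next
    case False
    then have "h n t = 0" for n using that a_pos[of n] b_lt[of n] by (auto simp: h_def)
    then show ?thesis using False by (auto simp: \<Phi>_def)
  qed
  have "integral {0..pi} (h n) \<le> C" for n
    using bound[OF a_pos a_le ab b_lt] unfolding h_def integral_restrict_Int sub .
  moreover have "integral {0..pi} (h n) \<ge> 0" for n
    by (rule integral_nonneg[OF h_int])
       (use nonneg a_pos[of n] b_lt[of n] in \<open>auto simp: h_def\<close>)
  ultimately have "bounded (range (\<lambda>n. integral {0..pi} (h n)))"
    unfolding bounded_iff by (intro exI[of _ C]) auto
  then have "\<Phi> integrable_on {0..pi}"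
    using monotone_convergence_increasing[OF h_int h_mono h_lim] by blast
  then show ?thesis
    by (rule integrable_spike[where S="{0,pi}"]) (auto simp: \<Phi>_def)
qed

lemma energy_density_identity:
  fixes P Q G Fv :: complex and s c e :: real
  assumes "s > 0" "e > 0" and P: "P = of_real s * G" and Fv: "Fv = of_real e * Q + G"
  shows "Re (cnj P * P * of_real (- c / s^2) + (cnj P * Q + cnj Q * P) * of_real (1/s))
       = (2/e) * (Re (cnj G * Fv) - norm G^2) - c * norm G^2"
proof -
  have Q: "Q = (Fv - G) / of_real e" using Fv \<open>e > 0\<close> by (simp add: field_simps)
  show ?thesis unfolding Q P cmod_power2 using assms(1,2)
    by (simp add: cmod_power2 power2_eq_square field_simps)
qed

lemma energy_density_bound:
  fixes G Fv :: complex and c e R :: real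
  assumes e: "0 < e" "e < 2" and c: "c \<ge> -1"
    and R: "R = (2/e) * (Re (cnj G * Fv) - norm G^2) - c * norm G^2"
  shows "(1 - e/2)/2 * norm G^2 \<le> norm Fv^2 / (2*(1 - e/2)) - (e/2) * R"
proof -
  define k where "k = 1 - e/2"
  have k: "k > 0" using e by (simp add: k_def)
  have "Re (cnj G * Fv) \<le> norm G * norm Fv"
    using abs_Re_le_cmod[of "cnj G * Fv"] by (simp add: norm_mult)
  also have "\<dots> \<le> k/2 * norm G^2 + norm Fv^2 / (2*k)"
  proof -
    have "2 * k * (norm G * norm Fv) \<le> k^2 * norm G^2 + norm Fv^2"
      using sum_squares_ge_zero[of "k * norm G - norm Fv" 0] by (simp add: power2_eq_square algebra_simps)
    then show ?thesis using k by (simp add: power2_eq_square field_simps)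
  qed
  finally have X: "Re (cnj G * Fv) \<le> k/2 * norm G^2 + norm Fv^2 / (2*k)" .
  have "e * (- c) \<le> e * 1" using c e by (intro mult_left_mono) auto
  then have "- (e * c / 2) * norm G^2 \<le> (e/2) * norm G^2"
    by (intro mult_right_mono) auto
  moreover have "(e/2) * R = Re (cnj G * Fv) - norm G^2 - (e * c / 2) * norm G^2"
    unfolding R using e by (simp add: field_simps)
  ultimately have "(e/2) * R \<le> k/2 * norm G^2 + norm Fv^2 / (2*k) - norm G^2 + (e/2) * norm G^2"
    using X by linarith
  also have "\<dots> = norm Fv^2 / (2*k) - k/2 * norm G^2" by (simp add: k_def field_simps)
  finally show ?thesis by (simp add: k_def)
qed

locale right_half =
  fixes \<epsilon> :: real and y p g q f :: "real \<Rightarrow> complex" and N :: "real set"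
  assumes eps: "0 < \<epsilon>" "\<epsilon> < 2"
    and N: "negligible N"
    and y_abs_cont: "abs_cont_on 0 pi y"
    and p_abs_cont: "\<And>a b. 0 < a \<Longrightarrow> b < pi \<Longrightarrow> abs_cont_on a b p"
    and eqs: "\<And>x. x \<in> {0<..<pi} - N \<Longrightarrow> (y has_vector_derivative g x) (at x) \<and>
      p x = complex_of_real (sin x) * g x \<and> (p has_vector_derivative q x) (at x) \<and>
      f x = complex_of_real \<epsilon> * q x + g x"
    and f_abs_int: "f absolutely_integrable_on {0..pi}"
    and f_square_int: "(\<lambda>x. norm (f x)^2) integrable_on {0..pi}"
begin

definition M :: real where "M = integral {0..pi} (\<lambda>x. norm (f x)^2)"

definition W :: "real \<Rightarrow> complex" where "W t = complex_of_real (weight \<epsilon> t) * p t"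

definition r :: "real \<Rightarrow> real" where "r x = sqrt x * (M + 1) / (2 * \<epsilon>)"

lemma M_nonneg: "M \<ge> 0"
  unfolding M_def by (rule integral_nonneg[OF f_square_int]) simp

lemma y_has_integral:
  assumes "0 \<le> s" "s \<le> x" "x \<le> pi"
  shows "(g has_integral (y x - y s)) {s..x}"
  by (rule has_integral_derivative_abs_cont[OF \<open>s \<le> x\<close> abs_cont_on_subinterval[OF y_abs_cont] N])
     (use assms eqs in auto)

lemma W_has_integral:
  assumes "0 < a" "a \<le> x" "x < pi"
  shows "((\<lambda>t. complex_of_real (weight \<epsilon> t) * f t / complex_of_real \<epsilon>) has_integral (W x - W a)) {a..x}"
proof (rule has_integral_derivative_abs_cont[OF \<open>a \<le> x\<close> _ N])
  show "abs_cont_on a x W"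
    unfolding W_def by (rule abs_cont_on_mult[OF abs_cont_on_weight p_abs_cont]) (use assms eps in auto)
  fix t assume "t \<in> {a<..<x} - N"
  then have t: "t \<in> {0<..<pi} - N" using assms by auto
  note e = eqs[OF t]
  have s: "sin t > 0" using t by (auto intro: sin_gt_zero)
  have "((\<lambda>t. complex_of_real (weight \<epsilon> t)) has_vector_derivative
      complex_of_real (weight \<epsilon> t / (\<epsilon> * sin t))) (at t)"
    by (rule has_vector_derivative_of_real[OF weight_has_real_derivative]) (use t eps in auto)
  then have "(W has_vector_derivative (complex_of_real (weight \<epsilon> t) * q t
      + complex_of_real (weight \<epsilon> t / (\<epsilon> * sin t)) * p t)) (at t)"
    unfolding W_def using e by (intro has_vector_derivative_mult) auto
  moreover have "complex_of_real (weight \<epsilon> t) * q t + complex_of_real (weight \<epsilon> t / (\<epsilon> * sin t)) * p t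
      = complex_of_real (weight \<epsilon> t) * f t / complex_of_real \<epsilon>"
    using e s eps by (simp add: field_simps)
  ultimately show "(W has_vector_derivative complex_of_real (weight \<epsilon> t) * f t / complex_of_real \<epsilon>) (at t)"
    by simp
qed

lemma integral_norm_f_le:
  assumes "0 < a" "a \<le> x" "x \<le> pi"
  shows "integral {a..x} (\<lambda>t. norm (f t)) \<le> sqrt x * (M + 1) / 2"
proof -
  have sub: "{a..x} \<subseteq> {0..pi}" using assms by auto
  have "integral {a..x} (\<lambda>t. norm (f t))
      \<le> (sqrt x * integral {a..x} (\<lambda>t. norm (f t)^2) + (x - a) / sqrt x) / 2"
  proof (rule integral_norm_le_square_mean)
    show "(\<lambda>t. norm (f t)) integrable_on {a..x}"
      using absolutely_integrable_on_subinterval[OF f_abs_int sub] absolutely_integrable_on_def by blast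
    show "(\<lambda>t. norm (f t)^2) integrable_on {a..x}"
      using integrable_on_subinterval[OF f_square_int sub] .
  qed (use assms in auto)
  also have "\<dots> \<le> (sqrt x * M + sqrt x) / 2"
  proof -
    have "integral {a..x} (\<lambda>t. norm (f t)^2) \<le> M"
      unfolding M_def by (rule integral_subset_le[OF sub]) (use integrable_on_subinterval[OF f_square_int sub] f_square_int in auto)
    then have "sqrt x * integral {a..x} (\<lambda>t. norm (f t)^2) \<le> sqrt x * M"
      using assms by (intro mult_left_mono) auto
    moreover have "(x - a) / sqrt x \<le> x / sqrt x" using assms by (simp add: divide_right_mono)
    moreover have "x / sqrt x = sqrt x" using assms by (simp add: real_div_sqrt)
    ultimately show ?thesis by (intro divide_right_mono add_mono) auto
  qed
  finally show ?thesis by (simp add: algebra_simps)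
qed

lemma W_increment_bound:
  assumes "0 < a" "a \<le> x" "x \<le> pi/3"
  shows "norm (W x - W a) \<le> weight \<epsilon> x * r x"
proof -
  have xp: "x < pi" using assms pi_gt_zero by linarith
  have hi: "((\<lambda>t. complex_of_real (weight \<epsilon> t) * f t / complex_of_real \<epsilon>) has_integral (W x - W a)) {a..x}"
    by (rule W_has_integral[OF assms(1,2) xp])
  have hf: "(\<lambda>t. norm (f t)) integrable_on {a..x}"
    using absolutely_integrable_on_subinterval[OF f_abs_int, of a x] assms xp absolutely_integrable_on_def
    by auto
  have "norm (W x - W a) = norm (integral {a..x} (\<lambda>t. complex_of_real (weight \<epsilon> t) * f t / complex_of_real \<epsilon>))"
    using integral_unique[OF hi] by (simp only:)
  also have "\<dots> \<le> integral {a..x} (\<lambda>t. (weight \<epsilon> x / \<epsilon>) * norm (f t))"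
  proof (rule integral_norm_bound_integral)
    show "(\<lambda>t. complex_of_real (weight \<epsilon> t) * f t / complex_of_real \<epsilon>) integrable_on {a..x}"
      using hi by blast
    show "(\<lambda>t. (weight \<epsilon> x / \<epsilon>) * norm (f t)) integrable_on {a..x}"
      using hf by (rule integrable_on_mult_right)
    fix t assume t: "t \<in> {a..x}"
    have "weight \<epsilon> t \<le> weight \<epsilon> x" using t assms xp eps by (intro weight_mono) auto
    then have "weight \<epsilon> t * norm (f t) / \<epsilon> \<le> weight \<epsilon> x * norm (f t) / \<epsilon>"
      using eps by (intro divide_right_mono mult_right_mono) auto
    then show "norm (complex_of_real (weight \<epsilon> t) * f t / complex_of_real \<epsilon>) \<le> (weight \<epsilon> x / \<epsilon>) * norm (f t)"
      using eps weight_pos[of \<epsilon> t] by (simp add: norm_mult norm_divide)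
  qed
  also have "\<dots> = (weight \<epsilon> x / \<epsilon>) * integral {a..x} (\<lambda>t. norm (f t))"
    by simp
  also have "\<dots> \<le> (weight \<epsilon> x / \<epsilon>) * (sqrt x * (M + 1) / 2)"
    using integral_norm_f_le[OF assms(1,2)] xp eps weight_pos[of \<epsilon> x] by (intro mult_left_mono) auto
  also have "\<dots> = weight \<epsilon> x * r x" by (simp add: r_def)
  finally show ?thesis .
qed

lemma Re_g_lower_bound:
  assumes t: "t \<in> {0<..<pi} - N" "t \<le> pi/2" and C: "0 \<le> C" "C \<le> Re (c * W t)"
  shows "C / t \<le> Re (c * g t)"
proof -
  have s: "sin t > 0" using t by (auto intro: sin_gt_zero)
  have "g t = W t / complex_of_real (weight \<epsilon> t * sin t)"
    using eqs[OF t(1)] s weight_pos[of \<epsilon> t] by (simp add: W_def field_simps)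
  then have "Re (c * g t) = Re (c * W t) / (weight \<epsilon> t * sin t)"
    by (simp add: add_divide_distrib)
  also have "\<dots> \<ge> C / (weight \<epsilon> t * sin t)"
    using C s weight_pos[of \<epsilon> t] by (intro divide_right_mono) auto
  moreover have "weight \<epsilon> t * sin t \<le> 1 * t"
    using weight_le_one[of t \<epsilon>] sin_x_le_x[of t] s t eps by (intro mult_mono) auto
  then have "C / (weight \<epsilon> t * sin t) \<ge> C / t"
    using C s t weight_pos[of \<epsilon> t] by (intro divide_left_mono) auto
  ultimately show ?thesis by linarith
qed

lemma norm_p_le:
  assumes x: "0 < x" "x \<le> pi/3"
  shows "norm (p x) \<le> 2 * r x"
proof (rule ccontr)
  \<comment> \<open>otherwise \<open>W\<close> stays so close to \<open>c = W x\<close> on \<open>(0, x]\<close> that \<open>Re (cnj c * g t) \<ge> |c|\<^sup>2 / (2 t)\<close>\<close>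
  assume big: "\<not> ?thesis"
  have xp: "x < pi" using x pi_gt_zero by linarith
  define c where "c = W x"
  have "norm c = weight \<epsilon> x * norm (p x)"
    unfolding c_def W_def using weight_pos[of \<epsilon> x] by (simp add: norm_mult)
  then have c_big: "norm c > 2 * (weight \<epsilon> x * r x)"
    using big weight_pos[of \<epsilon> x] by simp
  have "r x \<ge> 0" using x M_nonneg eps by (simp add: r_def)
  then have "0 \<le> 2 * (weight \<epsilon> x * r x)" using weight_pos[of \<epsilon> x] by simp
  then have "norm c > 0" using c_big by linarith
  have W_lb: "norm c ^ 2 / 2 \<le> Re (cnj c * W a)" if a: "0 < a" "a \<le> x" for a
  proof -
    have "cnj c * W a = complex_of_real (norm c ^ 2) + cnj c * (W a - c)"
      using complex_norm_square[of c] by (simp add: algebra_simps)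
    moreover have "\<bar>Re (cnj c * (W a - c))\<bar> \<le> norm c * (weight \<epsilon> x * r x)"
    proof -
      have "\<bar>Re (cnj c * (W a - c))\<bar> \<le> norm c * norm (W a - c)"
        using abs_Re_le_cmod[of "cnj c * (W a - c)"] by (simp add: norm_mult)
      also have "\<dots> \<le> norm c * (weight \<epsilon> x * r x)"
        using W_increment_bound[OF a x(2)] by (intro mult_left_mono) (auto simp: c_def norm_minus_commute)
      finally show ?thesis .
    qed
    moreover have "norm c * (weight \<epsilon> x * r x) \<le> norm c ^ 2 / 2"
      using c_big \<open>norm c > 0\<close> by (simp add: power2_eq_square)
    ultimately show ?thesis by auto
  qed
  obtain B where B: "\<And>s. s \<in> {0..pi} \<Longrightarrow> norm (y s) \<le> B"
    using abs_cont_on_bounded[OF y_abs_cont] by blast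
  show False
  proof (rule bounded_antiderivative_no_reciprocal_bound[OF _ x(1) N])
    show "norm c ^ 2 / 2 > 0" using \<open>norm c > 0\<close> by simp
    show "(g has_integral (y x - y s)) {s..x}" if "0 < s" "s \<le> x" for s
      using that xp by (intro y_has_integral) auto
    show "norm (y s) \<le> B" if "0 < s" "s \<le> x" for s
      using that xp by (intro B) auto
    show "(norm c ^ 2 / 2) / t \<le> Re (cnj c * g t)" if "t \<in> {0<..<x} - N" for t
      using that x xp W_lb[of t] by (intro Re_g_lower_bound) auto
  qed
qed

lemma boundary_term_bound:
  assumes "0 < x" "x \<le> pi/3"
  shows "norm (p x)^2 / sin x \<le> 2 * ((M + 1) / \<epsilon>)^2"
proof -
  have s: "x/2 \<le> sin x" using assms by (intro sin_ge_half_x) auto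
  have "norm (p x)^2 \<le> (2 * r x)^2"
    using norm_p_le[OF assms] by (intro power_mono) auto
  also have "\<dots> = x * ((M + 1) / \<epsilon>)^2"
    using assms eps by (simp add: r_def power_mult_distrib power_divide)
  finally have "norm (p x)^2 / sin x \<le> x * ((M + 1) / \<epsilon>)^2 / sin x"
    using s assms by (intro divide_right_mono) auto
  also have "\<dots> \<le> x * ((M + 1) / \<epsilon>)^2 / (x/2)"
    using s assms by (intro divide_left_mono) auto
  also have "\<dots> = 2 * ((M + 1) / \<epsilon>)^2" using assms by simp
  finally show ?thesis .
qed

text \<open>A continuous version of \<open>g\<close> on \<open>(0, pi)\<close>.\<close>

definition G :: "real \<Rightarrow> complex" where "G t = p t / complex_of_real (sin t)"

lemma G_square_integrable:
  assumes "0 < a" "b < pi"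
  shows "(\<lambda>t. norm (G t)^2) integrable_on {a..b}"
proof -
  have "continuous_on {a..b} p" by (rule abs_cont_on_imp_continuous_on[OF p_abs_cont[OF assms]])
  moreover have "complex_of_real (sin t) \<noteq> 0" if "t \<in> {a..b}" for t
    using that assms sin_gt_zero[of t] by auto
  ultimately show ?thesis
    unfolding G_def by (intro integrable_continuous_interval continuous_intros) auto
qed

lemma g_eq_G: "t \<in> {0<..<pi} - N \<Longrightarrow> g t = G t"
  using eqs sin_gt_zero[of t] by (auto simp: G_def)

text \<open>The energy \<open>|p|\<^sup>2 / sin\<close>: its derivative controls \<open>|g|\<^sup>2\<close> from above because \<open>\<epsilon> < 2\<close>.\<close>

definition energy :: "real \<Rightarrow> complex" where "energy t = cnj (p t) * p t * complex_of_real (1 / sin t)"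

definition energy' :: "real \<Rightarrow> complex" where "energy' t = cnj (p t) * p t * complex_of_real (- cos t / (sin t)^2)
  + (cnj (p t) * q t + cnj (q t) * p t) * complex_of_real (1 / sin t)"

lemma Re_energy: "Re (energy t) = norm (p t)^2 / sin t"
proof -
  have "cnj (p t) * p t = complex_of_real (norm (p t)^2)"
    using complex_norm_square[of "p t"] by (simp add: mult.commute)
  then show ?thesis by (simp add: energy_def)
qed

lemma energy_has_integral:
  assumes ab: "0 < a" "a \<le> b" "b < pi"
  shows "(energy' has_integral (energy b - energy a)) {a..b}"
proof (rule has_integral_derivative_abs_cont[OF ab(2) _ N])
  show "abs_cont_on a b energy"
    unfolding energy_def[abs_def]
    by (intro abs_cont_on_mult abs_cont_on_cnj p_abs_cont abs_cont_on_inverse_sin) (use ab in auto)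
  fix t assume "t \<in> {a<..<b} - N"
  then have t: "t \<in> {0<..<pi} - N" using ab by auto
  have dp: "(p has_vector_derivative q t) (at t)" using eqs[OF t] by blast
  have "((\<lambda>t. 1 / sin t) has_real_derivative (- cos t / (sin t)^2)) (at t)"
    using t sin_gt_zero[of t] by (auto intro!: derivative_eq_intros simp: power2_eq_square)
  then show "(energy has_vector_derivative energy' t) (at t)"
    unfolding energy_def[abs_def] energy'_def
    by (intro has_vector_derivative_mult has_vector_derivative_cnj dp has_vector_derivative_of_real)
qed

lemma energy'_bound:
  assumes t: "t \<in> {0<..<pi} - N"
  shows "(1 - \<epsilon>/2)/2 * norm (G t)^2 \<le> norm (f t)^2 / (2*(1 - \<epsilon>/2)) - (\<epsilon>/2) * Re (energy' t)"
proof -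
  have s: "sin t > 0" using t by (auto intro: sin_gt_zero)
  have "Re (energy' t) = (2/\<epsilon>) * (Re (cnj (g t) * f t) - norm (g t)^2) - cos t * norm (g t)^2"
    unfolding energy'_def by (rule energy_density_identity[OF s eps(1)]) (use eqs[OF t] in auto)
  from energy_density_bound[OF eps _ this] show ?thesis using g_eq_G[OF t] by simp
qed

lemma energy_estimate:
  assumes ab: "0 < a" "a \<le> b" "b < pi"
  shows "integral {a..b} (\<lambda>t. norm (G t)^2)
    \<le> M / (1 - \<epsilon>/2)^2 + \<epsilon> * (norm (p a)^2 / sin a) / (1 - \<epsilon>/2)"
proof -
  define k where "k = 1 - \<epsilon>/2"
  have k: "k > 0" using eps by (simp add: k_def)
  have hE: "((\<lambda>t. Re (energy' t)) has_integral (norm (p b)^2 / sin b - norm (p a)^2 / sin a)) {a..b}"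
    using has_integral_linear[OF energy_has_integral[OF ab] bounded_linear_Re]
    by (simp add: o_def Re_energy)
  define I where "I = integral {a..b} (\<lambda>t. norm (G t)^2)"
  define J where "J = integral {a..b} (\<lambda>t. norm (f t)^2)"
  have sub: "{a..b} \<subseteq> {0..pi}" using ab by auto
  have "((\<lambda>t. k/2 * norm (G t)^2) has_integral (k/2 * I)) {a..b}"
    unfolding I_def by (intro has_integral_mult_right integrable_integral G_square_integrable) (use ab in auto)
  moreover have "((\<lambda>t. if t \<in> N then k/2 * norm (G t)^2 else norm (f t)^2 / (2*k) - (\<epsilon>/2) * Re (energy' t))
      has_integral (J / (2*k) - (\<epsilon>/2) * (norm (p b)^2 / sin b - norm (p a)^2 / sin a))) {a..b}"
  proof (rule has_integral_spike[where S=N, rotated 2])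
    show "((\<lambda>t. norm (f t)^2 / (2*k) - (\<epsilon>/2) * Re (energy' t)) has_integral
        (J / (2*k) - (\<epsilon>/2) * (norm (p b)^2 / sin b - norm (p a)^2 / sin a))) {a..b}"
      unfolding J_def
      by (intro has_integral_diff has_integral_divide has_integral_mult_right integrable_integral
          integrable_on_subinterval[OF f_square_int sub] hE)
  qed (use N in auto)
  ultimately have "k/2 * I \<le> J / (2*k) - (\<epsilon>/2) * (norm (p b)^2 / sin b - norm (p a)^2 / sin a)"
    by (rule has_integral_le) (use energy'_bound ab in \<open>auto simp: k_def\<close>)
  also have "\<dots> \<le> M / (2*k) + (\<epsilon>/2) * (norm (p a)^2 / sin a)"
  proof -
    have "J \<le> M" unfolding J_def M_def
      by (rule integral_subset_le[OF sub]) (use integrable_on_subinterval[OF f_square_int sub] f_square_int in auto)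
    then have "J / (2*k) \<le> M / (2*k)" using k by (simp add: divide_right_mono)
    moreover have "(\<epsilon>/2) * (norm (p b)^2 / sin b) \<ge> 0" using ab eps sin_gt_zero[of b] by simp
    ultimately show ?thesis by (simp add: algebra_simps)
  qed
  finally have "I \<le> (M / (2*k) + (\<epsilon>/2) * (norm (p a)^2 / sin a)) / (k/2)"
    using k by (simp add: field_simps)
  also have "\<dots> = M / k^2 + \<epsilon> * (norm (p a)^2 / sin a) / k"
    using k by (simp add: field_simps power2_eq_square)
  finally show ?thesis unfolding I_def k_def .
qed

lemma g_square_integrable: "(\<lambda>t. norm (g t)^2) integrable_on {0..pi}"
proof -
  have "(\<lambda>t. norm (G t)^2) integrable_on {0..pi}"
  proof (rule integrable_on_0_pi_if_integrals_bounded)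
    fix a b assume "0 < a" "a \<le> pi/3" "a \<le> b" "b < pi"
    then have "integral {a..b} (\<lambda>t. norm (G t)^2)
        \<le> M / (1 - \<epsilon>/2)^2 + \<epsilon> * (norm (p a)^2 / sin a) / (1 - \<epsilon>/2)"
      by (intro energy_estimate) auto
    also have "\<dots> \<le> M / (1 - \<epsilon>/2)^2 + \<epsilon> * (2 * ((M + 1) / \<epsilon>)^2) / (1 - \<epsilon>/2)"
      using boundary_term_bound[of a] \<open>0 < a\<close> \<open>a \<le> pi/3\<close> eps
      by (intro add_left_mono divide_right_mono mult_left_mono) auto
    finally show "integral {a..b} (\<lambda>t. norm (G t)^2)
        \<le> M / (1 - \<epsilon>/2)^2 + \<epsilon> * (2 * ((M + 1) / \<epsilon>)^2) / (1 - \<epsilon>/2)" .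
  qed (auto intro: G_square_integrable)
  then show ?thesis
    by (rule integrable_spike[where S="N \<union> {0,pi}"]) (use N g_eq_G in auto)
qed

end

section \<open>The domain of \<open>L\<close>\<close>

lemma has_vector_derivative_reflect:
  assumes "(F has_vector_derivative F') (at (- x))"
  shows "((\<lambda>x. F (- x)) has_vector_derivative - F') (at x)"
proof -
  have "((\<lambda>x. - x) has_vector_derivative (-1)) (at x)"
    by (auto intro!: derivative_eq_intros)
  from vector_diff_chain_at[OF this] assms show ?thesis by (simp add: o_def)
qed

locale L_solution =
  fixes \<epsilon> :: real and y p g q f :: "real \<Rightarrow> complex" and N :: "real set"
  assumes eps: "0 < \<epsilon>" "\<epsilon> < 2"
    and N: "negligible N"
    and y_abs_cont: "abs_cont_on (-pi) pi y"
    and p_loc_abs_cont: "loc_abs_cont p"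
    and eqs: "\<And>x. x \<in> {-pi<..<pi} - N \<Longrightarrow> (y has_vector_derivative g x) (at x) \<and>
      p x = complex_of_real (sin x) * g x \<and> (p has_vector_derivative q x) (at x) \<and>
      f x = complex_of_real \<epsilon> * q x + g x"
    and f_sq_int: "sq_int f"
begin

lemma f_abs_int: "f absolutely_integrable_on {-pi..pi}"
  by (rule sq_int_absolutely_integrable[OF f_sq_int])

lemma f_square_int: "(\<lambda>x. norm (f x)^2) integrable_on {-pi..pi}"
  by (rule sq_int_norm_square_integrable[OF f_sq_int])

lemma p_abs_cont: "-pi < a \<Longrightarrow> b < pi \<Longrightarrow> abs_cont_on a b p"
  using p_loc_abs_cont unfolding loc_abs_cont_def by blast

lemma right_half_restriction: "right_half \<epsilon> y p g q f N"
proof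
  show "abs_cont_on 0 pi y" by (rule abs_cont_on_subinterval[OF y_abs_cont]) auto
  show "abs_cont_on a b p" if "0 < a" "b < pi" for a b
    using that pi_gt_zero by (intro p_abs_cont) linarith+
  show "f absolutely_integrable_on {0..pi}"
    by (rule absolutely_integrable_on_subinterval[OF f_abs_int]) auto
  show "(\<lambda>x. norm (f x)^2) integrable_on {0..pi}"
    by (rule integrable_on_subinterval[OF f_square_int]) auto
qed (use eps N eqs in auto)

lemma right_half_reflection:
  "right_half \<epsilon> (\<lambda>x. y (-x)) (\<lambda>x. p (-x)) (\<lambda>x. - g (-x)) (\<lambda>x. - q (-x)) (\<lambda>x. - f (-x)) (uminus ` N)"
proof
  show "negligible (uminus ` N)"
    by (rule negligible_differentiable_image_negligible[OF order_refl N]) (auto intro: derivative_intros)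
  show "abs_cont_on 0 pi (\<lambda>x. y (-x))"
    using abs_cont_on_reflect[OF abs_cont_on_subinterval[OF y_abs_cont, of "-pi" 0]] by simp
  show "abs_cont_on a b (\<lambda>x. p (-x))" if "0 < a" "b < pi" for a b
    using abs_cont_on_reflect[OF p_abs_cont[of "-b" "-a"]] that pi_gt_zero by simp
  fix x assume "x \<in> {0<..<pi} - uminus ` N"
  then have "-x \<in> {-pi<..<pi} - N" by (auto simp: image_iff)
  from eqs[OF this] show "((\<lambda>x. y (-x)) has_vector_derivative - g (-x)) (at x) \<and>
      p (-x) = complex_of_real (sin x) * - g (-x) \<and> ((\<lambda>x. p (-x)) has_vector_derivative - q (-x)) (at x) \<and>
      - f (-x) = complex_of_real \<epsilon> * - q (-x) + - g (-x)"
    by (auto intro: has_vector_derivative_reflect)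
next
  have "f absolutely_integrable_on {-pi..0}"
    by (rule absolutely_integrable_on_subinterval[OF f_abs_int]) auto
  then show "(\<lambda>x. - f (-x)) absolutely_integrable_on {0..pi}"
    using absolutely_integrable_reflect_real[where f=f and a="-pi" and b=0]
    by (simp add: absolutely_integrable_on_def integrable_neg)
  have "(\<lambda>x. norm (f x)^2) integrable_on {-pi..0}"
    by (rule integrable_on_subinterval[OF f_square_int]) auto
  then show "(\<lambda>x. norm (- f (-x))^2) integrable_on {0..pi}"
    using Henstock_Kurzweil_Integration.integrable_reflect_real[where f="\<lambda>x. norm (f x)^2" and a="-pi" and b=0]
    by simp
qed (use eps in auto)

lemma sq_int_g: "sq_int g"
proof -
  have "(\<lambda>t. norm (g (-t))^2) integrable_on {0..pi}"
    using right_half.g_square_integrable[OF right_half_reflection] by simp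
  then have "(\<lambda>t. norm (g t)^2) integrable_on {-pi..0}"
    using Henstock_Kurzweil_Integration.integrable_reflect_real[where f="\<lambda>t. norm (g t)^2" and a="-pi" and b=0]
    by simp
  then have "(\<lambda>t. norm (g t)^2) integrable_on {-pi..pi}"
    using right_half.g_square_integrable[OF right_half_restriction]
    by (intro Henstock_Kurzweil_Integration.integrable_combine[where a="-pi" and c=0 and b=pi]) auto
  moreover have "g \<in> borel_measurable Om"
  proof -
    have "(g has_integral (y pi - y (-pi))) {-pi..pi}"
      by (rule has_integral_derivative_abs_cont[OF _ y_abs_cont N]) (use eqs in auto)
    then have "g integrable_on {-pi<..<pi}"
      using has_integral_open_interval[of g _ "-pi" pi] by (auto simp: box_real)
    then show ?thesis unfolding Om_def by (rule integrable_imp_measurable)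
  qed
  ultimately show ?thesis by (intro sq_intI)
qed

text \<open>Almost everywhere \<open>p' = (f - y')/\<epsilon>\<close>, so \<open>p\<close> differs from \<open>(\<integral>f - y)/\<epsilon>\<close> by a constant.\<close>

lemma abs_cont_extension_of_p:
  obtains P where "abs_cont_on (-pi) pi P" "\<And>x. x \<in> {-pi<..<pi} \<Longrightarrow> P x = p x"
proof -
  have f_int: "f integrable_on {-pi..pi}"
    using f_abs_int by (auto dest: set_lebesgue_integral_eq_integral(1))
  define I where "I x = integral {-pi..x} f" for x
  define P where "P x = p 0 + complex_of_real (1/\<epsilon>) * ((I x - I 0) - (y x - y 0))" for x
  have "abs_cont_on (-pi) pi P"
    unfolding P_def I_def
    by (intro abs_cont_on_add abs_cont_on_const abs_cont_on_cmult abs_cont_on_diff y_abs_cont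
        abs_cont_on_integral f_abs_int f_square_int)
  moreover have increment: "p v - p u = complex_of_real (1/\<epsilon>) * ((I v - I u) - (y v - y u))"
    if uv: "-pi < u" "u \<le> v" "v < pi" for u v
  proof -
    have q_int: "(q has_integral (p v - p u)) {u..v}"
      by (rule has_integral_derivative_abs_cont[OF uv(2) p_abs_cont N]) (use uv eqs in auto)
    have "integral {-pi..u} f + integral {u..v} f = integral {-pi..v} f"
      by (rule Henstock_Kurzweil_Integration.integral_combine)
         (use uv integrable_on_subinterval[OF f_int] in auto)
    then have "I v - I u = integral {u..v} f" by (simp add: I_def algebra_simps)
    then have "(f has_integral (I v - I u)) {u..v}"
      using integrable_on_subinterval[OF f_int, of u v] uv by auto
    moreover have "(g has_integral (y v - y u)) {u..v}"
      by (rule has_integral_derivative_abs_cont[OF uv(2) abs_cont_on_subinterval[OF y_abs_cont] N])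
         (use eqs uv in auto)
    ultimately have "((\<lambda>t. complex_of_real (1/\<epsilon>) * (f t - g t)) has_integral
        complex_of_real (1/\<epsilon>) * ((I v - I u) - (y v - y u))) {u..v}"
      by (intro has_integral_mult_right has_integral_diff)
    then have "(q has_integral complex_of_real (1/\<epsilon>) * ((I v - I u) - (y v - y u))) {u..v}"
    proof (rule has_integral_spike[where S="N \<union> {u,v}", rotated 2])
      fix t assume "t \<in> {u..v} - (N \<union> {u,v})"
      then have "f t = complex_of_real \<epsilon> * q t + g t" using eqs uv by auto
      then show "q t = complex_of_real (1/\<epsilon>) * (f t - g t)" using eps by (simp add: field_simps)
    qed (use N in auto)
    with q_int show ?thesis by (rule has_integral_unique)
  qed
  have "P x = p x" if "x \<in> {-pi<..<pi}" for x
  proof (cases "0 \<le> x")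
    case True
    then show ?thesis using increment[of 0 x] that by (simp add: P_def algebra_simps)
  next
    case False
    then show ?thesis using increment[of x 0] that by (simp add: P_def algebra_simps)
  qed
  ultimately show ?thesis using that by blast
qed

end

lemma graph_L_imp_graph_MS:
  assumes eps: "0 < \<epsilon>" "\<epsilon> < 2" and "graph_L \<epsilon> y f"
  shows "graph_MS \<epsilon> y f"
proof -
  obtain y0 g p q where sy: "sq_int y" and sf: "sq_int f"
    and y0: "AE x in Om. y x = y0 x" "abs_cont_on (-pi) pi y0" "y0 (-pi) = y0 pi"
    and p: "loc_abs_cont p"
    and eqs_AE: "AE x in Om. (y0 has_vector_derivative g x) (at x) \<and>
      p x = complex_of_real (sin x) * g x \<and> (p has_vector_derivative q x) (at x) \<and>
      f x = complex_of_real \<epsilon> * q x + g x"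
    using \<open>graph_L \<epsilon> y f\<close> unfolding graph_L_def by (auto simp: AE_conj_iff)
  obtain N where N: "negligible N" and eqs: "\<And>x. x \<in> {-pi<..<pi} - N \<Longrightarrow>
      (y0 has_vector_derivative g x) (at x) \<and> p x = complex_of_real (sin x) * g x \<and>
      (p has_vector_derivative q x) (at x) \<and> f x = complex_of_real \<epsilon> * q x + g x"
    using AE_Om_E[OF eqs_AE] by blast
  interpret L_solution \<epsilon> y0 p g q f N
    using eps N y0(2) p eqs sf by unfold_locales auto
  obtain P where P: "abs_cont_on (-pi) pi P" "\<And>x. x \<in> {-pi<..<pi} \<Longrightarrow> P x = p x"
    using abs_cont_extension_of_p by blast
  have "AE x in Om. P x = complex_of_real (sin x) * g x \<and> (P has_vector_derivative q x) (at x)"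
  proof (rule AE_OmI[OF N])
    fix x assume x: "x \<in> {-pi<..<pi} - N"
    have "(P has_vector_derivative q x) (at x)"
      by (rule has_vector_derivative_transform_within_open[of p _ _ "{-pi<..<pi}"]) (use eqs[OF x] x P in auto)
    then show "P x = complex_of_real (sin x) * g x \<and> (P has_vector_derivative q x) (at x)"
      using eqs[OF x] x P by auto
  qed
  then have "graph_M \<epsilon> g f"
    unfolding graph_M_def using sq_int_g sf P(1) eqs_AE by (auto simp: AE_conj_iff)
  moreover have "graph_S y g"
    unfolding graph_S_def using sy sq_int_g y0 eqs_AE by (auto simp: AE_conj_iff)
  ultimately show ?thesis unfolding graph_MS_def by blast
qed

lemma graph_MS_imp_graph_L:
  assumes "graph_MS \<epsilon> y f"
  shows "graph_L \<epsilon> y f"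
proof -
  obtain z where "graph_S y z" "graph_M \<epsilon> z f" using assms unfolding graph_MS_def by blast
  moreover have "loc_abs_cont p" if "abs_cont_on (-pi) pi p" for p
    unfolding loc_abs_cont_def using abs_cont_on_subinterval[OF that] by auto
  ultimately show ?thesis unfolding graph_S_def graph_M_def graph_L_def by blast
qed

theorem theorem1:
  fixes \<epsilon> :: real
  assumes "0 < \<epsilon>" and "\<epsilon> < 2"
  shows "(\<forall>y f. graph_L \<epsilon> y f \<longleftrightarrow> graph_MS \<epsilon> y f) \<and>
         {y. \<exists>f. graph_L \<epsilon> y f} = {y. \<exists>f. graph_MS \<epsilon> y f}"
  using graph_L_imp_graph_MS[OF assms] graph_MS_imp_graph_L by blast

end
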